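(* Let $a<b$, $n\in\mathbb N$, $\alpha=(\alpha_1,\ldots,\alpha_n)$ with $\alpha_j\in(0,1)$, $z_a\in\mathbb R$, $x_a\in\mathbb R^n$. Let $L:[a,b]\times\mathbb R^{2n+1}\to\mathbb R$, $L=L(t,x,v,z)$, be of class $C^1$. For $x\in C^1([a,b],\mathbb R^n)$ with ${^C_aD^\alpha_t}x:=({^C_aD^{\alpha_1}_t}x_1,\ldots,{^C_aD^{\alpha_n}_t}x_n)\in C^1([a,b],\mathbb R^n)$, let $z[x;\cdot]$ be the solution of $\frac{dz}{dt}=L(t,x(t),{^C_aD^\alpha_t}x(t),z(t))$, $t\in[a,b]$, $z(a)=z_a$. Write $[x,z](t):=(t,x(t),{^C_aD^\alpha_t}x(t),z(t))$ and $\lambda(t):=\exp\left(-\int_a^t\frac{\partial L}{\partial z}[x,z](\tau)\,d\tau\right)$, and assume that ${_tD^{\alpha_j}_b}\left(\lambda(t)\frac{\partial L}{\partial {^C_aD^{\alpha_j}_t}x_j}[x,z](t)\right)$ exists and is continuous on $[a,b]$ for each $j$. Suppose $x(a)=x_a$ and, for some set $J\subseteq\{1,\ldots,n\}$, the end values $x_j(b)$, $j\notin J$, are prescribed while $x_j(b)$, $j\in J$, are free. If $x$ is such that $z[x;b]$ attains an extremum over this class (i.e. $\frac{d}{d\epsilon}z[x+\epsilon\eta;b]|_{\epsilon=0}=0$ for all $\eta\in C^1([a,b],\mathbb R^n)$ with ${^C_aD^\alpha_t}\eta\in C^1$, $\eta(a)=0$, and $\eta_j(b)=0$ for $j\notin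 J$), then $x$ satisfies, for $j=1,\ldots,n$ and $t\in[a,b]$, $$\lambda(t)\frac{\partial L}{\partial x_j}[x,z](t)+{_tD^{\alpha_j}_b}\left(\lambda(t)\frac{\partial L}{\partial {^C_aD^{\alpha_j}_t}x_j}[x,z](t)\right)=0,$$ and, for every $j\in J$, the transversality condition $${_tI^{1-\alpha_j}_b}\left(\lambda(t)\frac{\partial L}{\partial {^C_aD^{\alpha_j}_t}x_j}[x,z](t)\right)\Big|_{t=b}=0.$$
   Context: For $\alpha\in(0,1)$ and $f:[a,b]\to\mathbb R$: ${^C_aD^\alpha_t}f(t)=\frac{1}{\Gamma(1-\alpha)}\int_a^t(t-\tau)^{-\alpha}f'(\tau)\,d\tau$ (left Caputo derivative); ${_tI^{\beta}_b}f(t)=\frac{1}{\Gamma(\beta)}\int_t^b(\tau-t)^{\beta-1}f(\tau)\,d\tau$ (right Riemann–Liouville integral, $\beta>0$); ${_tD^\alpha_b}f(t)=\frac{-1}{\Gamma(1-\alpha)}\frac{d}{dt}\int_t^b(\tau-t)^{-\alpha}f(\tau)\,d\tau$ (right Riemann–Liouville derivative). Partial derivatives of $L$ are taken with respect to the corresponding components of its arguments $(t,x,v,z)$, with $\frac{\partial L}{\partial {^C_aD^{\alpha_j}_t}x_j}$ meaning $\partial L/\partial v_j$. The solution $z$ is assumed to exist and depend differentiably on a parameter $\epsilon$ when $x$ is replaced by $x+\epsilon\eta$, with the same initial value $z_a$. *)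

theory Defs
  imports "HOL-Analysis.Analysis"
begin

definition C1_on :: "real set \<Rightarrow> (real \<Rightarrow> 'a::real_normed_vector) \<Rightarrow> bool" where
  "C1_on S f \<longleftrightarrow> (\<exists>f'. (\<forall>t\<in>S. (f has_vector_derivative f' t) (at t within S)) \<and> continuous_on S f')"

definition caputo_left :: "real \<Rightarrow> real \<Rightarrow> (real \<Rightarrow> real) \<Rightarrow> real \<Rightarrow> real" where
  "caputo_left a \<alpha> f t =
     1 / Gamma (1 - \<alpha>) * integral {a..t} (\<lambda>\<tau>. (t - \<tau>) powr (- \<alpha>) * vector_derivative f (at \<tau>))"

definition caputo_vec :: "real \<Rightarrow> ('n::finite \<Rightarrow> real) \<Rightarrow> (real \<Rightarrow> real^'n) \<Rightarrow> real \<Rightarrow> real^'n" where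
  "caputo_vec a \<alpha> x t = (\<chi> j. caputo_left a (\<alpha> j) (\<lambda>s. x s $ j) t)"

definition right_RL_int :: "real \<Rightarrow> real \<Rightarrow> (real \<Rightarrow> real) \<Rightarrow> real \<Rightarrow> real" where
  "right_RL_int \<beta> b f t = 1 / Gamma \<beta> * integral {t..b} (\<lambda>\<tau>. (\<tau> - t) powr (\<beta> - 1) * f \<tau>)"

definition right_RL_kernel :: "real \<Rightarrow> real \<Rightarrow> (real \<Rightarrow> real) \<Rightarrow> real \<Rightarrow> real" where
  "right_RL_kernel \<alpha> b f s = integral {s..b} (\<lambda>\<tau>. (\<tau> - s) powr (- \<alpha>) * f \<tau>)"

definition right_RL_deriv_exists :: "real \<Rightarrow> real \<Rightarrow> real \<Rightarrow> (real \<Rightarrow> real) \<Rightarrow> real \<Rightarrow> bool" where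
  "right_RL_deriv_exists a b \<alpha> f t \<longleftrightarrow> right_RL_kernel \<alpha> b f differentiable (at t within {a..b})"

definition right_RL_deriv :: "real \<Rightarrow> real \<Rightarrow> real \<Rightarrow> (real \<Rightarrow> real) \<Rightarrow> real \<Rightarrow> real" where
  "right_RL_deriv a b \<alpha> f t =
     - 1 / Gamma (1 - \<alpha>) * vector_derivative (right_RL_kernel \<alpha> b f) (at t within {a..b})"

definition admissible :: "real \<Rightarrow> real \<Rightarrow> ('n::finite \<Rightarrow> real) \<Rightarrow> (real \<Rightarrow> real^'n) \<Rightarrow> bool" where
  "admissible a b \<alpha> y \<longleftrightarrow> C1_on {a..b} y \<and> C1_on {a..b} (caputo_vec a \<alpha> y)"

definition herglotz_solution ::
  "real \<Rightarrow> real \<Rightarrow> ('n::finite \<Rightarrow> real) \<Rightarrow> (real \<Rightarrow> real^'n \<Rightarrow> real^'n \<Rightarrow> real \<Rightarrow> real)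
   \<Rightarrow> real \<Rightarrow> (real \<Rightarrow> real^'n) \<Rightarrow> (real \<Rightarrow> real) \<Rightarrow> bool" where
  "herglotz_solution a b \<alpha> L za y z \<longleftrightarrow> z a = za \<and>
     (\<forall>t\<in>{a..b}. (z has_real_derivative L t (y t) (caputo_vec a \<alpha> y t) (z t)) (at t within {a..b}))"

definition herglotz_lambda ::
  "real \<Rightarrow> ('n::finite \<Rightarrow> real) \<Rightarrow> (real \<Rightarrow> real^'n \<Rightarrow> real^'n \<Rightarrow> real \<Rightarrow> real)
   \<Rightarrow> (real \<Rightarrow> real^'n) \<Rightarrow> (real \<Rightarrow> real) \<Rightarrow> real \<Rightarrow> real" where
  "herglotz_lambda a \<alpha> Lz x z t =
     exp (- integral {a..t} (\<lambda>\<tau>. Lz \<tau> (x \<tau>) (caputo_vec a \<alpha> x \<tau>) (z \<tau>)))"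

end

theory Submission
  imports Defs
begin

text \<open>
  Perturb \<open>x\<close> in a direction \<open>\<eta> = \<psi> e\<^sub>j\<close>, where \<open>\<psi>\<close> ranges over the polynomials
  \<open>(s - a)^(i + 2) (b - s)\<close>. Along the perturbation, Gronwall's inequality makes \<open>z[x + \<epsilon>\<eta>] - z[x]\<close>
  of order \<open>\<epsilon>\<close>, and then it solves the linearised Herglotz equation up to \<open>o(\<epsilon>)\<close> uniformly in \<open>t\<close>.
  Multiplying by the integrating factor \<open>\<lambda>\<close> and integrating, stationarity of \<open>z[x + \<epsilon>\<eta>; b]\<close> gives
  \<open>\<integral> \<lambda> (\<partial>\<^sub>xL \<cdot> \<eta> + \<partial>\<^sub>vL \<cdot> D\<^sup>\<alpha>\<eta>) = 0\<close>. Fubini's theorem for the weakly singular kernel moves the Caputo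
  derivative from \<open>\<psi>\<close> onto \<open>\<lambda> \<partial>\<^sub>vL\<close> as a right Riemann--Liouville derivative, and by the Weierstrass
  approximation theorem a continuous function orthogonal to all these polynomials vanishes.
\<close>

section \<open>The weakly singular kernel\<close>

lemma has_integral_powr_kernel_left:
  fixes \<alpha> c d :: real
  assumes "\<alpha> < 1" "c \<le> d"
  shows "((\<lambda>s. (s - c) powr (- \<alpha>)) has_integral (d - c) powr (1 - \<alpha>) / (1 - \<alpha>)) {c..d}"
proof -
  have "((\<lambda>s. s powr (- \<alpha>)) has_integral (d - c) powr (1 - \<alpha>) / (1 - \<alpha>)) {0..d - c}"
    using has_integral_powr_from_0[of "- \<alpha>" "d - c"] assms by simp
  from has_integral_shift_real_ivl[OF this, of "- c"] show ?thesis by simp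
qed

lemma has_integral_powr_kernel_right:
  fixes \<alpha> c d :: real
  assumes "\<alpha> < 1" "c \<le> d"
  shows "((\<lambda>s. (d - s) powr (- \<alpha>)) has_integral (d - c) powr (1 - \<alpha>) / (1 - \<alpha>)) {c..d}"
proof -
  have "((\<lambda>s. (s - (- d)) powr (- \<alpha>)) has_integral (d - c) powr (1 - \<alpha>) / (1 - \<alpha>)) {- d..- c}"
    using has_integral_powr_kernel_left[of \<alpha> "- d" "- c"] assms by simp
  then show ?thesis
    using has_integral_reflect_real[of "\<lambda>s. (d - s) powr (- \<alpha>)" _ d c] by (simp add: add.commute)
qed

lemma nn_integral_powr_kernel_right:
  fixes \<alpha> a t :: real
  assumes "\<alpha> < 1" "a \<le> t"
  shows "(\<integral>\<^sup>+\<tau>. ennreal (indicator {a..t} \<tau> * (t - \<tau>) powr (- \<alpha>)) \<partial>lborel)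
           = ennreal ((t - a) powr (1 - \<alpha>) / (1 - \<alpha>))"
  using nn_integral_has_integral_lebesgue[OF _ has_integral_powr_kernel_right[OF assms]] by simp

lemma integrable_lborel_powr_kernel_right:
  fixes \<alpha> a t :: real
  assumes "\<alpha> < 1" "a \<le> t"
  shows "integrable lborel (\<lambda>\<tau>. indicator {a..t} \<tau> * (t - \<tau>) powr (- \<alpha>))"
  by (rule integrableI_nonneg) (auto simp: nn_integral_powr_kernel_right[OF assms])

lemma integrable_lborel_powr_kernel_left:
  fixes \<alpha> t b :: real
  assumes "\<alpha> < 1" "t \<le> b"
  shows "integrable lborel (\<lambda>s. indicator {t..b} s * (s - t) powr (- \<alpha>))"
proof (rule integrableI_nonneg)
  show "(\<integral>\<^sup>+s. ennreal (indicator {t..b} s * (s - t) powr (- \<alpha>)) \<partial>lborel) < \<infinity>"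
    using nn_integral_has_integral_lebesgue[OF _ has_integral_powr_kernel_left[OF assms]] by simp
qed auto

lemma integrable_triangle_powr_kernel:
  fixes \<alpha> a b :: real
  assumes \<alpha>: "\<alpha> < 1" and ab: "a \<le> b"
  shows "integrable (lborel \<Otimes>\<^sub>M lborel)
    (\<lambda>x. if a \<le> snd x \<and> snd x \<le> fst x \<and> fst x \<le> b then (fst x - snd x) powr (- \<alpha>) else 0)"
    (is "integrable _ ?G")
proof (rule integrableI_nonneg)
  have "(\<integral>\<^sup>+x. ennreal (?G x) \<partial>(lborel \<Otimes>\<^sub>M lborel)) = (\<integral>\<^sup>+t. \<integral>\<^sup>+\<tau>. ennreal (?G (t, \<tau>)) \<partial>lborel \<partial>lborel)"
    by (rule lborel.nn_integral_fst[symmetric]) measurable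
  also have "\<dots> \<le> (\<integral>\<^sup>+t. ennreal ((b - a) powr (1 - \<alpha>) / (1 - \<alpha>)) * indicator {a..b} t \<partial>lborel)"
  proof (rule nn_integral_mono)
    fix t :: real
    show "(\<integral>\<^sup>+\<tau>. ennreal (?G (t, \<tau>)) \<partial>lborel) \<le> ennreal ((b - a) powr (1 - \<alpha>) / (1 - \<alpha>)) * indicator {a..b} t"
    proof (cases "t \<in> {a..b}")
      case True
      then have "(\<integral>\<^sup>+\<tau>. ennreal (?G (t, \<tau>)) \<partial>lborel)
          = (\<integral>\<^sup>+\<tau>. ennreal (indicator {a..t} \<tau> * (t - \<tau>) powr (- \<alpha>)) \<partial>lborel)"
        by (intro nn_integral_cong) (auto simp: indicator_def)
      also have "\<dots> = ennreal ((t - a) powr (1 - \<alpha>) / (1 - \<alpha>))"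
        using True by (intro nn_integral_powr_kernel_right[OF \<alpha>]) auto
      also have "\<dots> \<le> ennreal ((b - a) powr (1 - \<alpha>) / (1 - \<alpha>))"
        using True \<alpha> by (intro ennreal_leI divide_right_mono powr_mono2) auto
      finally show ?thesis using True by simp
    next
      case False
      then have "?G (t, \<tau>) = 0" for \<tau> by auto
      then show ?thesis by simp
    qed
  qed
  also have "\<dots> < \<infinity>"
    using ab by (simp add: nn_integral_cmult_indicator ennreal_mult_less_top)
  finally show "(\<integral>\<^sup>+x. ennreal (?G x) \<partial>(lborel \<Otimes>\<^sub>M lborel)) < \<infinity>" .
qed auto

lemma lborel_integral_eq_integral_dominated:
  fixes g h f :: "real \<Rightarrow> real"
  assumes g: "integrable lborel g" and h: "h \<in> borel_measurable lborel"
    and bound: "\<And>x. norm (h x) \<le> norm (M * g x)" and h_eq: "h = (\<lambda>x. if x \<in> S then f x else 0)"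
  shows "(\<integral>x. h x \<partial>lborel) = integral S f"
proof -
  have "integrable lborel h"
    using g bound by (intro Bochner_Integration.integrable_bound[OF integrable_mult_right[where c = M] h]) auto
  then have "(\<integral>x. h x \<partial>lborel) = integral UNIV h"
    by (simp add: integral_lborel)
  then show ?thesis
    unfolding h_eq by (simp only: integral_restrict_UNIV)
qed

lemma integral_powr_kernel_swap:
  fixes f p :: "real \<Rightarrow> real" and \<alpha> a b :: real
  assumes fc: "continuous_on {a..b} f" and pc: "continuous_on {a..b} p" and \<alpha>: "\<alpha> < 1"
  shows "integral {a..b} (\<lambda>t. f t * integral {a..t} (\<lambda>\<tau>. (t - \<tau>) powr (- \<alpha>) * p \<tau>)) =
         integral {a..b} (\<lambda>\<tau>. p \<tau> * integral {\<tau>..b} (\<lambda>t. (t - \<tau>) powr (- \<alpha>) * f t))"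
proof (cases "a \<le> b")
  case False
  then show ?thesis by simp
next
  case ab: True
  define f0 where "f0 t = indicator {a..b} t *\<^sub>R f t" for t
  define p0 where "p0 t = indicator {a..b} t *\<^sub>R p t" for t
  have [measurable]: "f0 \<in> borel_measurable borel" "p0 \<in> borel_measurable borel"
    unfolding f0_def p0_def
    using borel_measurable_continuous_on_indicator[OF _ fc] borel_measurable_continuous_on_indicator[OF _ pc]
    by auto
  obtain Mf where Mf0: "0 \<le> Mf" and Mf: "\<And>t. t \<in> {a..b} \<Longrightarrow> \<bar>f t\<bar> \<le> Mf"
    using continuous_on_compact_bound[OF compact_Icc fc] by auto
  obtain Mp where Mp0: "0 \<le> Mp" and Mp: "\<And>t. t \<in> {a..b} \<Longrightarrow> \<bar>p t\<bar> \<le> Mp"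
    using continuous_on_compact_bound[OF compact_Icc pc] by auto
  define G where "G x = (if a \<le> snd x \<and> snd x \<le> fst x \<and> fst x \<le> b then (fst x - snd x) powr (- \<alpha>) else 0)"
    for x :: "real \<times> real"
  define F where "F x = G x * (f0 (fst x) * p0 (snd x))" for x
  have [measurable]: "G \<in> borel_measurable (lborel \<Otimes>\<^sub>M lborel)" "F \<in> borel_measurable (lborel \<Otimes>\<^sub>M lborel)"
    unfolding F_def G_def by measurable
  have G_fst: "G (t, \<tau>) = indicator {a..t} \<tau> * (t - \<tau>) powr (- \<alpha>)" if "t \<in> {a..b}" for t \<tau>
    using that by (auto simp: G_def indicator_def)
  have G_snd: "G (t, \<tau>) = indicator {\<tau>..b} t * (t - \<tau>) powr (- \<alpha>)" if "\<tau> \<in> {a..b}" for t \<tau>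
    using that by (auto simp: G_def indicator_def)
  have G_out: "G (t, \<tau>) = 0" if "t \<notin> {a..b} \<or> \<tau> \<notin> {a..b}" for t \<tau>
    using that by (auto simp: G_def)
  have F_bound: "norm (F x) \<le> norm (Mf * Mp * G x)" for x
  proof (cases "a \<le> snd x \<and> snd x \<le> fst x \<and> fst x \<le> b")
    case True
    then have "\<bar>f0 (fst x)\<bar> \<le> Mf" "\<bar>p0 (snd x)\<bar> \<le> Mp"
      by (auto simp: f0_def p0_def intro!: Mf Mp)
    moreover have "0 \<le> G x" by (simp add: G_def)
    ultimately have "G x * (\<bar>f0 (fst x)\<bar> * \<bar>p0 (snd x)\<bar>) \<le> G x * (Mf * Mp)"
      by (intro mult_left_mono mult_mono) auto
    then show ?thesis
      using \<open>0 \<le> G x\<close> Mf0 Mp0 by (simp add: F_def abs_mult mult_ac)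
  qed (auto simp: F_def G_def)
  have "integrable (lborel \<Otimes>\<^sub>M lborel) G"
    unfolding G_def by (rule integrable_triangle_powr_kernel[OF \<alpha> ab])
  then have "integrable (lborel \<Otimes>\<^sub>M lborel) F"
    by (rule Bochner_Integration.integrable_bound[OF integrable_mult_right[where c = "Mf * Mp"]])
      (use F_bound in \<open>auto intro: AE_I2\<close>)
  then have F_int: "integrable (lborel \<Otimes>\<^sub>M lborel) (\<lambda>(t, \<tau>). F (t, \<tau>))"
    by simp
  have F_slices: "(\<lambda>\<tau>. F (t, \<tau>)) \<in> borel_measurable lborel" "(\<lambda>t. F (t, \<tau>)) \<in> borel_measurable lborel"
    for t \<tau>
    by measurable
  have inner_fst: "(\<integral>\<tau>. F (t, \<tau>) \<partial>lborel) =
      (if t \<in> {a..b} then f t * integral {a..t} (\<lambda>\<tau>. (t - \<tau>) powr (- \<alpha>) * p \<tau>) else 0)" for t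
  proof (cases "t \<in> {a..b}")
    case t: True
    have "(\<integral>\<tau>. F (t, \<tau>) \<partial>lborel) = integral {a..t} (\<lambda>\<tau>. f t * ((t - \<tau>) powr (- \<alpha>) * p \<tau>))"
      using F_bound[of "(t, _)"] t
      by (intro lborel_integral_eq_integral_dominated[OF integrable_lborel_powr_kernel_right[OF \<alpha>, of a t]
          F_slices(1)])
        (auto simp: F_def G_fst f0_def p0_def fun_eq_iff)
    then show ?thesis using t by simp
  qed (auto simp: F_def G_out)
  have inner_snd: "(\<integral>t. F (t, \<tau>) \<partial>lborel) =
      (if \<tau> \<in> {a..b} then p \<tau> * integral {\<tau>..b} (\<lambda>t. (t - \<tau>) powr (- \<alpha>) * f t) else 0)" for \<tau>
  proof (cases "\<tau> \<in> {a..b}")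
    case \<tau>: True
    have "(\<integral>t. F (t, \<tau>) \<partial>lborel) = integral {\<tau>..b} (\<lambda>t. p \<tau> * ((t - \<tau>) powr (- \<alpha>) * f t))"
      using F_bound[of "(_, \<tau>)"] \<tau>
      by (intro lborel_integral_eq_integral_dominated[OF integrable_lborel_powr_kernel_left[OF \<alpha>, of \<tau> b]
          F_slices(2)])
        (auto simp: F_def G_snd f0_def p0_def fun_eq_iff)
    then show ?thesis using \<tau> by simp
  qed (auto simp: F_def G_out)
  have "integral {a..b} (\<lambda>t. f t * integral {a..t} (\<lambda>\<tau>. (t - \<tau>) powr (- \<alpha>) * p \<tau>))
      = integral UNIV (\<lambda>t. \<integral>\<tau>. F (t, \<tau>) \<partial>lborel)"
    unfolding inner_fst by (rule integral_restrict_UNIV[symmetric])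
  also have "\<dots> = (\<integral>t. \<integral>\<tau>. F (t, \<tau>) \<partial>lborel \<partial>lborel)"
    using lborel_pair.integrable_fst'[OF F_int] by (simp add: integral_lborel)
  also have "\<dots> = (\<integral>\<tau>. \<integral>t. F (t, \<tau>) \<partial>lborel \<partial>lborel)"
    using lborel_pair.Fubini_integral[OF F_int] by simp
  also have "\<dots> = integral UNIV (\<lambda>\<tau>. \<integral>t. F (t, \<tau>) \<partial>lborel)"
    using lborel_pair.integrable_snd[OF F_int] by (simp add: integral_lborel)
  also have "\<dots> = integral {a..b} (\<lambda>\<tau>. p \<tau> * integral {\<tau>..b} (\<lambda>t. (t - \<tau>) powr (- \<alpha>) * f t))"
    unfolding inner_snd by (rule integral_restrict_UNIV)
  finally show ?thesis .
qed

section \<open>Caputo derivatives\<close>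

lemma C1_onE:
  assumes "C1_on S f"
  obtains f' where "\<And>t. t \<in> S \<Longrightarrow> (f has_vector_derivative f' t) (at t within S)" "continuous_on S f'"
  using assms unfolding C1_on_def by blast

lemma C1_on_imp_continuous_on: "C1_on S f \<Longrightarrow> continuous_on S f"
  by (erule C1_onE) (auto simp: continuous_on_eq_continuous_within intro: has_vector_derivative_continuous)

lemma C1_on_add_scaleR:
  "C1_on S f \<Longrightarrow> C1_on S g \<Longrightarrow> C1_on S (\<lambda>t. c *\<^sub>R f t + d *\<^sub>R g t)"
  unfolding C1_on_def by (fastforce intro!: derivative_eq_intros continuous_intros)

lemma C1_on_scaleR_right:
  fixes f :: "real \<Rightarrow> real"
  assumes "C1_on S f"
  shows "C1_on S (\<lambda>t. f t *\<^sub>R v)"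
proof -
  obtain f' where "\<And>t. t \<in> S \<Longrightarrow> (f has_vector_derivative f' t) (at t within S)" "continuous_on S f'"
    using C1_onE[OF assms] by blast
  then show ?thesis
    unfolding C1_on_def
    by (intro exI[of _ "\<lambda>t. f' t *\<^sub>R v"] conjI ballI continuous_intros
        bounded_linear.has_vector_derivative[OF bounded_linear_scaleR_left]) auto
qed

lemma C1_on_cong: "C1_on S f \<Longrightarrow> (\<And>t. t \<in> S \<Longrightarrow> f t = g t) \<Longrightarrow> C1_on S g"
  unfolding C1_on_def by (metis has_vector_derivative_transform)

lemma caputo_left_eq_integral:
  assumes "\<And>\<tau>. a < \<tau> \<Longrightarrow> \<tau> < t \<Longrightarrow> (f has_real_derivative f' \<tau>) (at \<tau>)"
  shows "caputo_left a \<alpha> f t = integral {a..t} (\<lambda>\<tau>. (t - \<tau>) powr (- \<alpha>) * f' \<tau>) / Gamma (1 - \<alpha>)"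
proof -
  have "integral {a..t} (\<lambda>\<tau>. (t - \<tau>) powr (- \<alpha>) * vector_derivative f (at \<tau>))
      = integral {a..t} (\<lambda>\<tau>. (t - \<tau>) powr (- \<alpha>) * f' \<tau>)"
    using assms
    by (intro integral_spike[of "{a, t}"])
      (auto simp: has_real_derivative_iff_has_vector_derivative intro!: vector_derivative_at[symmetric])
  then show ?thesis by (simp add: caputo_left_def)
qed

lemma powr_kernel_mult_integrable_on:
  fixes p :: "real \<Rightarrow> real"
  assumes pc: "continuous_on {a..t} p" and \<alpha>: "\<alpha> < 1" and at: "a \<le> t"
  shows "(\<lambda>\<tau>. (t - \<tau>) powr (- \<alpha>) * p \<tau>) integrable_on {a..t}"
proof -
  have "(\<lambda>\<tau>. (t - \<tau>) powr (- \<alpha>)) absolutely_integrable_on {a..t}"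
    using has_integral_powr_kernel_right[OF \<alpha> at]
    by (intro nonnegative_absolutely_integrable_1) (auto simp: has_integral_integrable)
  then have "(\<lambda>\<tau>. p \<tau> * (t - \<tau>) powr (- \<alpha>)) absolutely_integrable_on {a..t}"
    using continuous_imp_measurable_on_sets_lebesgue[OF pc]
      compact_imp_bounded[OF compact_continuous_image[OF pc compact_Icc]]
    by (intro absolutely_integrable_bounded_measurable_product_real) auto
  then show ?thesis
    using set_lebesgue_integral_eq_integral(1) by (simp add: mult.commute)
qed

lemma caputo_left_linear:
  fixes f g :: "real \<Rightarrow> real"
  assumes f: "\<And>\<tau>. a < \<tau> \<Longrightarrow> \<tau> < t \<Longrightarrow> (f has_real_derivative f' \<tau>) (at \<tau>)"
    and g: "\<And>\<tau>. a < \<tau> \<Longrightarrow> \<tau> < t \<Longrightarrow> (g has_real_derivative g' \<tau>) (at \<tau>)"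
    and f'c: "continuous_on {a..t} f'" and g'c: "continuous_on {a..t} g'"
    and \<alpha>: "\<alpha> < 1" and at: "a \<le> t"
  shows "caputo_left a \<alpha> (\<lambda>s. c * f s + d * g s) t = c * caputo_left a \<alpha> f t + d * caputo_left a \<alpha> g t"
proof -
  have "caputo_left a \<alpha> (\<lambda>s. c * f s + d * g s) t
      = integral {a..t} (\<lambda>\<tau>. c * ((t - \<tau>) powr (- \<alpha>) * f' \<tau>) + d * ((t - \<tau>) powr (- \<alpha>) * g' \<tau>))
        / Gamma (1 - \<alpha>)"
    using f g by (subst caputo_left_eq_integral) (auto intro!: derivative_eq_intros simp: algebra_simps)
  also have "\<dots> = c * caputo_left a \<alpha> f t + d * caputo_left a \<alpha> g t"
    by (simp add: integral_add integrable_on_mult_right powr_kernel_mult_integrable_on[OF f'c \<alpha> at]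
        powr_kernel_mult_integrable_on[OF g'c \<alpha> at] caputo_left_eq_integral[OF f]
        caputo_left_eq_integral[OF g] add_divide_distrib)
  finally show ?thesis .
qed

lemma C1_on_component_derivative:
  fixes y :: "real \<Rightarrow> real^'n"
  assumes y: "C1_on {a..b} y" and t: "t \<le> b"
  obtains y' where "continuous_on {a..t} y'"
    "\<And>\<tau>. a < \<tau> \<Longrightarrow> \<tau> < t \<Longrightarrow> ((\<lambda>s. y s $ j) has_real_derivative y' \<tau>) (at \<tau>)"
proof -
  obtain y' where y': "\<And>s. s \<in> {a..b} \<Longrightarrow> (y has_vector_derivative y' s) (at s within {a..b})"
    "continuous_on {a..b} y'"
    using C1_onE[OF y] by blast
  show ?thesis
  proof (rule that[of "\<lambda>\<tau>. y' \<tau> $ j"])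
    show "continuous_on {a..t} (\<lambda>\<tau>. y' \<tau> $ j)"
      using t by (intro continuous_intros continuous_on_subset[OF y'(2)]) auto
    fix \<tau> assume "a < \<tau>" "\<tau> < t"
    then have "(y has_vector_derivative y' \<tau>) (at \<tau>)"
      using y'(1)[of \<tau>] t at_within_Icc_at[of a \<tau> b] by auto
    from bounded_linear.has_vector_derivative[OF bounded_linear_vec_nth this, of j]
    show "((\<lambda>s. y s $ j) has_real_derivative y' \<tau> $ j) (at \<tau>)"
      by (simp add: has_real_derivative_iff_has_vector_derivative)
  qed
qed

lemma caputo_vec_add_scaleR:
  fixes x \<eta> :: "real \<Rightarrow> real^'n"
  assumes x: "C1_on {a..b} x" and \<eta>: "C1_on {a..b} \<eta>" and t: "t \<in> {a..b}" and \<alpha>: "\<And>j. \<alpha> j < 1"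
  shows "caputo_vec a \<alpha> (\<lambda>s. x s + c *\<^sub>R \<eta> s) t = caputo_vec a \<alpha> x t + c *\<^sub>R caputo_vec a \<alpha> \<eta> t"
proof -
  have "caputo_left a (\<alpha> j) (\<lambda>s. 1 * x s $ j + c * \<eta> s $ j) t
      = 1 * caputo_left a (\<alpha> j) (\<lambda>s. x s $ j) t + c * caputo_left a (\<alpha> j) (\<lambda>s. \<eta> s $ j) t" for j
  proof -
    obtain x' where "continuous_on {a..t} x'"
      "\<And>\<tau>. a < \<tau> \<Longrightarrow> \<tau> < t \<Longrightarrow> ((\<lambda>s. x s $ j) has_real_derivative x' \<tau>) (at \<tau>)"
      using C1_on_component_derivative[OF x] t by auto
    moreover obtain \<eta>' where "continuous_on {a..t} \<eta>'"
      "\<And>\<tau>. a < \<tau> \<Longrightarrow> \<tau> < t \<Longrightarrow> ((\<lambda>s. \<eta> s $ j) has_real_derivative \<eta>' \<tau>) (at \<tau>)"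
      using C1_on_component_derivative[OF \<eta>] t by auto
    ultimately show ?thesis
      using \<alpha>[of j] t by (intro caputo_left_linear[where f' = x' and g' = \<eta>']) auto
  qed
  then show ?thesis by (simp add: caputo_vec_def vec_eq_iff)
qed

lemma caputo_vec_scaleR_axis:
  "caputo_vec a \<alpha> (\<lambda>s. \<psi> s *\<^sub>R axis j 1) t = caputo_left a (\<alpha> j) \<psi> t *\<^sub>R axis j 1"
proof -
  have "caputo_left a (\<alpha> k) (\<lambda>s. (\<psi> s *\<^sub>R axis j (1::real)) $ k) t
      = (caputo_left a (\<alpha> j) \<psi> t *\<^sub>R axis j (1::real)) $ k" for k
    by (cases "k = j") (simp_all add: axis_def caputo_left_def)
  then show ?thesis unfolding caputo_vec_def by (simp add: vec_eq_iff)
qed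

lemma has_integral_powr_kernel_monomial:
  fixes \<alpha> a t :: real and m :: nat
  assumes \<alpha>: "\<alpha> < 1" and at: "a \<le> t" and m: "1 \<le> m"
  shows "((\<lambda>\<tau>. (t - \<tau>) powr (- \<alpha>) * (\<tau> - a) ^ (m - 1)) has_integral
           Beta m (1 - \<alpha>) * (t - a) powr (m - \<alpha>)) {a..t}"
proof (cases "a = t")
  case True then show ?thesis by (simp add: has_integral_refl)
next
  case False
  with at have at': "a < t" by simp
  define B where "B = Beta m (1 - \<alpha>)"
  define G where "G s = s powr (real m - 1) * (1 - s) powr (1 - \<alpha> - 1)" for s :: real
  have "(G has_integral B) (cbox 0 1)"
    unfolding G_def B_def using has_integral_Beta_real[of m "1 - \<alpha>"] \<alpha> m by simp
  from has_integral_affinity'[OF this, of "1 / (t - a)" "- a / (t - a)"]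
  have "((\<lambda>x. G ((1 / (t - a)) *\<^sub>R x + - a / (t - a))) has_integral B /\<^sub>R (1 / (t - a)) ^ DIM(real))
      (cbox ((0 - - a / (t - a)) /\<^sub>R (1 / (t - a))) ((1 - - a / (t - a)) /\<^sub>R (1 / (t - a))))"
    using at' by simp
  moreover have "(0 - - a / (t - a)) /\<^sub>R (1 / (t - a)) = a" "(1 - - a / (t - a)) /\<^sub>R (1 / (t - a)) = t"
    "B /\<^sub>R (1 / (t - a)) ^ DIM(real) = (t - a) * B"
    using at' by (simp_all add: field_simps)
  moreover have "(1 / (t - a)) *\<^sub>R x + - a / (t - a) = (x - a) / (t - a)" for x
    by (simp add: diff_divide_distrib)
  ultimately have "((\<lambda>\<tau>. G ((\<tau> - a) / (t - a))) has_integral (t - a) * B) {a..t}"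
    by simp
  moreover have "(t - a) powr (real m - 1 - \<alpha>) * ((t - a) * B) = B * (t - a) powr (m - \<alpha>)"
    using powr_add[of "t - a" "real m - 1 - \<alpha>" 1] at' by (simp add: mult_ac)
  ultimately have scaled: "((\<lambda>\<tau>. (t - a) powr (real m - 1 - \<alpha>) * G ((\<tau> - a) / (t - a))) has_integral
      B * (t - a) powr (m - \<alpha>)) {a..t}"
    using has_integral_mult_right by metis
  show ?thesis
    unfolding B_def[symmetric]
  proof (rule has_integral_spike[OF negligible_finite[of "{a, t}"] _ scaled])
    fix \<tau> assume "\<tau> \<in> {a..t} - {a, t}"
    then have \<tau>: "a < \<tau>" "\<tau> < t" by auto
    have "1 - (\<tau> - a) / (t - a) = (t - \<tau>) / (t - a)" using at' by (simp add: field_simps)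
    then have "G ((\<tau> - a) / (t - a))
        = (\<tau> - a) ^ (m - 1) / (t - a) powr (real m - 1) * ((t - \<tau>) powr (- \<alpha>) / (t - a) powr (- \<alpha>))"
      using \<tau> m by (simp add: G_def powr_divide powr_realpow[symmetric] of_nat_diff)
    moreover have "(t - a) powr (real m - 1 - \<alpha>) = (t - a) powr (real m - 1) * (t - a) powr (- \<alpha>)"
      by (simp add: powr_add[symmetric])
    moreover have "(t - a) powr (real m - 1) > 0" "(t - a) powr (- \<alpha>) > 0" using at' by auto
    ultimately show "(t - \<tau>) powr (- \<alpha>) * (\<tau> - a) ^ (m - 1) = (t - a) powr (real m - 1 - \<alpha>) * G ((\<tau> - a) / (t - a))"
      by (simp add: field_simps)
  qed simp
qed

lemma caputo_left_monomial:
  fixes \<alpha> a t :: real and m :: nat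
  assumes \<alpha>: "\<alpha> < 1" and at: "a \<le> t" and m: "1 \<le> m"
  shows "caputo_left a \<alpha> (\<lambda>s. (s - a) ^ m) t = m * Beta m (1 - \<alpha>) * (t - a) powr (m - \<alpha>) / Gamma (1 - \<alpha>)"
proof -
  have "caputo_left a \<alpha> (\<lambda>s. (s - a) ^ m) t
      = integral {a..t} (\<lambda>\<tau>. m * ((t - \<tau>) powr (- \<alpha>) * (\<tau> - a) ^ (m - 1))) / Gamma (1 - \<alpha>)"
    by (subst caputo_left_eq_integral[where f' = "\<lambda>\<tau>. m * (\<tau> - a) ^ (m - 1)"])
      (auto intro!: derivative_eq_intros simp: mult_ac)
  then show ?thesis
    using integral_unique[OF has_integral_powr_kernel_monomial[OF \<alpha> at m]] by simp
qed

lemma has_real_derivative_powr_within_Icc: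
  fixes a b r t :: real
  assumes r: "1 < r" and t: "t \<in> {a..b}"
  shows "((\<lambda>s. (s - a) powr r) has_real_derivative r * (t - a) powr (r - 1)) (at t within {a..b})"
proof (cases "a < t")
  case True
  have "((\<lambda>s. (s - a) powr r) has_real_derivative r * (t - a) powr (r - 1) * (1 - 0)) (at t)"
    using True by (auto intro!: derivative_eq_intros)
  then show ?thesis by (auto intro: has_field_derivative_at_within)
next
  case False
  with t have ta: "t = a" by auto
  have "continuous_on {a..b} (\<lambda>s. (s - a) powr (r - 1))"
    using r by (intro continuous_on_powr' continuous_intros) auto
  then have "((\<lambda>s. (s - a) powr (r - 1)) \<longlongrightarrow> 0) (at a within {a..b})"
    using t ta r unfolding continuous_on_def by fastforce
  then have "((\<lambda>y. ((y - a) powr r - (a - a) powr r) / (y - a)) \<longlongrightarrow> 0) (at a within {a..b})"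
    by (rule Lim_transform_within[OF _ zero_less_one]) (auto simp: dist_real_def powr_diff)
  then show ?thesis using ta by (simp add: has_field_derivative_iff)
qed

lemma C1_on_caputo_left_monomial:
  assumes \<alpha>: "\<alpha> < 1" and m: "2 \<le> m"
  shows "C1_on {a..b} (caputo_left a \<alpha> (\<lambda>s. (s - a) ^ m))"
proof (rule C1_on_cong)
  define c where "c = m * Beta m (1 - \<alpha>) / Gamma (1 - \<alpha>)"
  have r: "1 < m - \<alpha>" using \<alpha> m by linarith
  show "C1_on {a..b} (\<lambda>t. c * (t - a) powr (m - \<alpha>))"
    unfolding C1_on_def has_real_derivative_iff_has_vector_derivative[symmetric]
    using r by (intro exI[of _ "\<lambda>t. c * ((m - \<alpha>) * (t - a) powr (m - \<alpha> - 1))"] conjI ballI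
      DERIV_cmult has_real_derivative_powr_within_Icc continuous_intros continuous_on_powr') auto
  show "c * (t - a) powr (m - \<alpha>) = caputo_left a \<alpha> (\<lambda>s. (s - a) ^ m) t" if "t \<in> {a..b}" for t
    using that m caputo_left_monomial[OF \<alpha>, of a t m] by (simp add: c_def)
qed

section \<open>Polynomial test functions\<close>

text \<open>The factor \<open>(s - a)\<^sup>2\<close> makes the Caputo derivative of a test function \<open>C\<^sup>1\<close> up to \<open>s = a\<close>.\<close>
definition bump_poly :: "real \<Rightarrow> real \<Rightarrow> nat \<Rightarrow> real \<Rightarrow> real" where
  "bump_poly a b i s = (s - a) ^ (i + 2) * (b - s)"

lemma bump_poly_expand: "bump_poly a b i = (\<lambda>s. (b - a) * (s - a) ^ (i + 2) + (- 1) * (s - a) ^ (i + 3))"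
proof
  fix s
  have "(s - a) ^ (i + 3) = (s - a) ^ (i + 2) * (s - a)"
    by (simp add: numeral_eq_Suc)
  then show "bump_poly a b i s = (b - a) * (s - a) ^ (i + 2) + (- 1) * (s - a) ^ (i + 3)"
    by (simp add: bump_poly_def algebra_simps)
qed

lemma has_real_derivative_power_diff:
  "((\<lambda>s. (s - a) ^ m) has_real_derivative m * (t - a) ^ (m - 1)) (at t)"
  by (auto intro!: derivative_eq_intros)

lemma continuous_on_power_diff:
  fixes a :: real
  shows "continuous_on S (\<lambda>s. real m * (s - a) ^ (m - 1))"
  by (intro continuous_intros)

lemma has_real_derivative_bump_poly:
  "(bump_poly a b i has_real_derivative
     (b - a) * (real (i + 2) * (t - a) ^ (i + 2 - 1)) + (- 1) * (real (i + 3) * (t - a) ^ (i + 3 - 1))) (at t)"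
  unfolding bump_poly_expand by (intro DERIV_add DERIV_cmult has_real_derivative_power_diff)

lemma bump_poly_zero_left: "bump_poly a b i a = 0"
  by (simp add: bump_poly_def)

lemma bump_poly_zero_right: "bump_poly a b i b = 0"
  by (simp add: bump_poly_def)

lemma C1_on_bump_poly: "C1_on S (bump_poly a b i)"
  unfolding C1_on_def has_real_derivative_iff_has_vector_derivative[symmetric]
  by (intro exI[of _ "\<lambda>t. (b - a) * (real (i + 2) * (t - a) ^ (i + 2 - 1))
      + (- 1) * (real (i + 3) * (t - a) ^ (i + 3 - 1))"] conjI ballI continuous_intros
      has_field_derivative_at_within[OF has_real_derivative_bump_poly])

lemma C1_on_caputo_left_bump_poly:
  assumes \<alpha>: "\<alpha> < 1"
  shows "C1_on {a..b} (caputo_left a \<alpha> (bump_poly a b i))"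
proof (rule C1_on_cong)
  show "C1_on {a..b} (\<lambda>t. (b - a) *\<^sub>R caputo_left a \<alpha> (\<lambda>s. (s - a) ^ (i + 2)) t
      + (- 1) *\<^sub>R caputo_left a \<alpha> (\<lambda>s. (s - a) ^ (i + 3)) t)"
    using \<alpha> by (intro C1_on_add_scaleR C1_on_caputo_left_monomial) auto
  show "(b - a) *\<^sub>R caputo_left a \<alpha> (\<lambda>s. (s - a) ^ (i + 2)) t
      + (- 1) *\<^sub>R caputo_left a \<alpha> (\<lambda>s. (s - a) ^ (i + 3)) t = caputo_left a \<alpha> (bump_poly a b i) t"
    if "t \<in> {a..b}" for t
    unfolding bump_poly_expand real_scaleR_def
    by (rule caputo_left_linear[OF has_real_derivative_power_diff has_real_derivative_power_diff
          continuous_on_power_diff continuous_on_power_diff \<alpha>, symmetric]) (use that in auto)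
qed

lemma admissible_bump_poly_axis:
  assumes "\<And>j. \<alpha> j < 1"
  shows "admissible a b \<alpha> (\<lambda>s. bump_poly a b i s *\<^sub>R axis j 1)"
  unfolding admissible_def
proof
  show "C1_on {a..b} (\<lambda>s. bump_poly a b i s *\<^sub>R axis j 1)"
    by (intro C1_on_scaleR_right C1_on_bump_poly)
  show "C1_on {a..b} (caputo_vec a \<alpha> (\<lambda>s. bump_poly a b i s *\<^sub>R axis j 1))"
    by (rule C1_on_cong[OF C1_on_scaleR_right[OF C1_on_caputo_left_bump_poly]])
      (use assms in \<open>simp_all add: caputo_vec_scaleR_axis\<close>)
qed

lemma integral_square_le_of_orthogonal_polynomials:
  fixes H :: "real \<Rightarrow> real"
  assumes ab: "a \<le> b" and Hc: "continuous_on {a..b} H"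
    and orth: "\<And>i. integral {a..b} (\<lambda>t. H t * (t - a) ^ i) = 0"
    and MH: "\<And>t. t \<in> {a..b} \<Longrightarrow> \<bar>H t\<bar> \<le> MH" and e: "0 < e"
  shows "integral {a..b} (\<lambda>t. H t * H t) \<le> MH * e * (b - a)"
proof -
  have MH0: "0 \<le> MH" using MH[of a] ab by auto
  have "continuous_on {0..b - a} (\<lambda>s. H (s + a))"
    by (rule continuous_on_compose2[OF Hc]) (auto intro!: continuous_intros)
  then obtain g where g: "real_polynomial_function g" "\<And>s. s \<in> {0..b - a} \<Longrightarrow> \<bar>H (s + a) - g s\<bar> < e"
    using Stone_Weierstrass_real_polynomial_function[OF compact_Icc _ e] by blast
  obtain c n where g_sum: "g = (\<lambda>x. \<Sum>i\<le>n. c i * x ^ i)"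
    using g(1) real_polynomial_function_iff_sum by blast
  have "integral {a..b} (\<lambda>t. H t * g (t - a)) = integral {a..b} (\<lambda>t. \<Sum>i\<le>n. c i * (H t * (t - a) ^ i))"
    unfolding g_sum by (simp add: sum_distrib_left mult_ac)
  also have "\<dots> = (\<Sum>i\<le>n. c i * integral {a..b} (\<lambda>t. H t * (t - a) ^ i))"
    by (subst integral_sum) (auto intro!: integrable_continuous_real continuous_intros Hc)
  finally have g_orth: "integral {a..b} (\<lambda>t. H t * g (t - a)) = 0"
    by (simp add: orth)
  have "integral {a..b} (\<lambda>t. H t * H t) = integral {a..b} (\<lambda>t. H t * (H t - g (t - a)))"
    using g_orth unfolding g_sum
    by (simp add: right_diff_distrib integral_diff integrable_continuous_real continuous_intros Hc)
  also have "\<dots> \<le> MH * e * (b - a)"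
  proof -
    have "norm (integral {a..b} (\<lambda>t. H t * (H t - g (t - a)))) \<le> MH * e * measure lborel (cbox a b)"
    proof (rule has_integral_bound)
      show "((\<lambda>t. H t * (H t - g (t - a))) has_integral integral {a..b} (\<lambda>t. H t * (H t - g (t - a))))
          (cbox a b)"
        unfolding g_sum by (auto intro!: integrable_integral integrable_continuous_real continuous_intros Hc)
      fix t assume "t \<in> cbox a b"
      then show "norm (H t * (H t - g (t - a))) \<le> MH * e"
        using MH[of t] g(2)[of "t - a"] e by (auto simp: abs_mult intro!: mult_mono)
    qed (use MH0 e in simp)
    then show ?thesis using ab by simp
  qed
  finally show ?thesis .
qed

lemma continuous_orthogonal_polynomials_imp_zero:
  fixes H :: "real \<Rightarrow> real"
  assumes ab: "a < b" and Hc: "continuous_on {a..b} H"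
    and orth: "\<And>i. integral {a..b} (\<lambda>t. H t * (t - a) ^ i) = 0"
    and t: "t \<in> {a..b}"
  shows "H t = 0"
proof -
  obtain MH where MH0: "0 \<le> MH" and MH: "\<And>t. t \<in> {a..b} \<Longrightarrow> \<bar>H t\<bar> \<le> MH"
    using continuous_on_compact_bound[OF compact_Icc Hc] by auto
  have H2c: "continuous_on {a..b} (\<lambda>t. H t * H t)"
    by (intro continuous_intros Hc)
  have "integral {a..b} (\<lambda>t. H t * H t) \<le> 0"
  proof (rule field_le_epsilon)
    fix \<epsilon> :: real assume "\<epsilon> > 0"
    define e where "e = \<epsilon> / ((MH + 1) * (b - a))"
    have pos: "(MH + 1) * (b - a) > 0" using ab MH0 by simp
    then have "e > 0" and e: "(MH + 1) * e * (b - a) = \<epsilon>"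
      using \<open>\<epsilon> > 0\<close> ab MH0 by (simp_all add: e_def)
    have "integral {a..b} (\<lambda>t. H t * H t) \<le> MH * e * (b - a)"
      using integral_square_le_of_orthogonal_polynomials[OF less_imp_le[OF ab] Hc orth MH \<open>e > 0\<close>] by simp
    also have "\<dots> \<le> (MH + 1) * e * (b - a)"
      using ab \<open>e > 0\<close> by (intro mult_right_mono) auto
    finally show "integral {a..b} (\<lambda>t. H t * H t) \<le> 0 + \<epsilon>" using e by simp
  qed
  moreover have "0 \<le> integral {a..b} (\<lambda>t. H t * H t)"
    by (intro integral_nonneg integrable_continuous_real H2c) auto
  ultimately have "\<forall>s\<in>{a..b}. H s * H s = 0"
    using integral_eq_0_iff[OF H2c ab] by simp
  then show "H t = 0"
    using t by simp
qed

lemma continuous_orthogonal_bump_polys_imp_zero: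
  fixes F :: "real \<Rightarrow> real"
  assumes ab: "a < b" and Fc: "continuous_on {a..b} F"
    and orth: "\<And>i. integral {a..b} (\<lambda>t. F t * bump_poly a b i t) = 0"
    and t: "t \<in> {a..b}"
  shows "F t = 0"
proof -
  have bump: "bump_poly a b i s = (s - a) ^ 2 * (b - s) * (s - a) ^ i" for i s
    by (simp only: bump_poly_def power_add mult_ac)
  have vanish: "F s * ((s - a) ^ 2 * (b - s)) = 0" if "s \<in> {a..b}" for s
  proof (rule continuous_orthogonal_polynomials_imp_zero[OF ab _ _ that])
    show "continuous_on {a..b} (\<lambda>s. F s * ((s - a) ^ 2 * (b - s)))"
      by (intro continuous_intros Fc)
    show "integral {a..b} (\<lambda>s. F s * ((s - a) ^ 2 * (b - s)) * (s - a) ^ i) = 0" for i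
      using orth[of i] by (simp only: bump mult.assoc)
  qed
  have interior_zero: "F s = 0" if "s \<in> {a<..<b}" for s
    using vanish[of s] that by simp
  have closure: "closure {a<..<b} = {a..b}"
    using ab by simp
  show ?thesis
    by (rule continuous_constant_on_closure[of "{a<..<b}" F 0 t]) (simp_all only: closure Fc t interior_zero)
qed

section \<open>Fractional integration by parts\<close>

lemma integral_mult_caputo_left_eq_right_RL_deriv:
  fixes g \<psi> \<psi>' :: "real \<Rightarrow> real"
  assumes ab: "a \<le> b" and \<alpha>: "\<alpha> < 1" and gc: "continuous_on {a..b} g"
    and ex: "\<And>t. t \<in> {a..b} \<Longrightarrow> right_RL_deriv_exists a b \<alpha> g t"
    and Rc: "continuous_on {a..b} (right_RL_deriv a b \<alpha> g)"
    and \<psi>: "\<And>t. (\<psi> has_real_derivative \<psi>' t) (at t)" and \<psi>'c: "continuous_on {a..b} \<psi>'"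
    and \<psi>a: "\<psi> a = 0"
  shows "integral {a..b} (\<lambda>t. g t * caputo_left a \<alpha> \<psi> t) = integral {a..b} (\<lambda>t. \<psi> t * right_RL_deriv a b \<alpha> g t)"
proof -
  define \<Gamma> where "\<Gamma> = Gamma (1 - \<alpha>)"
  have \<Gamma>: "\<Gamma> > 0" unfolding \<Gamma>_def using \<alpha> by (intro Gamma_real_pos) simp
  define K where "K = right_RL_kernel \<alpha> b g"
  define R where "R = right_RL_deriv a b \<alpha> g"
  have K_deriv: "(K has_real_derivative - \<Gamma> * R t) (at t within {a..b})" if "t \<in> {a..b}" for t
  proof -
    have "(K has_vector_derivative vector_derivative K (at t within {a..b})) (at t within {a..b})"
      using ex[OF that] by (simp add: K_def right_RL_deriv_exists_def vector_derivative_works[symmetric])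
    moreover have "vector_derivative K (at t within {a..b}) = - \<Gamma> * R t"
      using \<Gamma> by (simp add: K_def R_def right_RL_deriv_def \<Gamma>_def)
    ultimately show ?thesis by (simp add: has_real_derivative_iff_has_vector_derivative)
  qed
  have \<psi>c: "continuous_on {a..b} \<psi>"
    using \<psi> by (intro continuous_at_imp_continuous_on) (auto intro: DERIV_isCont)
  have "((\<lambda>t. \<psi> t * K t) has_real_derivative \<psi>' t * K t + \<psi> t * (- \<Gamma> * R t)) (at t within {a..b})"
    if "t \<in> {a..b}" for t
    using DERIV_mult[OF has_field_derivative_at_within[OF \<psi>] K_deriv[OF that]] by (simp add: mult_ac)
  then have ftc: "((\<lambda>t. \<psi>' t * K t + \<psi> t * (- \<Gamma> * R t)) has_integral \<psi> b * K b - \<psi> a * K a) {a..b}"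
    unfolding has_real_derivative_iff_has_vector_derivative by (rule fundamental_theorem_of_calculus[OF ab])
  have "K b = 0" by (simp add: K_def right_RL_kernel_def)
  have R_part: "((\<lambda>t. \<psi> t * (- \<Gamma> * R t)) has_integral - \<Gamma> * integral {a..b} (\<lambda>t. \<psi> t * R t)) {a..b}"
  proof -
    have "(\<lambda>t. \<psi> t * R t) integrable_on {a..b}"
      unfolding R_def by (intro integrable_continuous_real continuous_intros \<psi>c Rc)
    from has_integral_mult_right[OF integrable_integral[OF this], of "- \<Gamma>"]
    show ?thesis by (simp add: mult_ac)
  qed
  have parts: "integral {a..b} (\<lambda>t. \<psi>' t * K t) = \<Gamma> * integral {a..b} (\<lambda>t. \<psi> t * R t)"
    using integral_unique[OF has_integral_diff[OF ftc R_part]] \<open>K b = 0\<close> \<psi>a by simp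
  have "integral {a..b} (\<lambda>t. g t * caputo_left a \<alpha> \<psi> t)
      = integral {a..b} (\<lambda>t. g t * integral {a..t} (\<lambda>\<tau>. (t - \<tau>) powr (- \<alpha>) * \<psi>' \<tau>)) / \<Gamma>"
    using caputo_left_eq_integral[OF \<psi>, of a \<alpha>] by (simp add: \<Gamma>_def)
  also have "\<dots> = integral {a..b} (\<lambda>\<tau>. \<psi>' \<tau> * K \<tau>) / \<Gamma>"
    unfolding K_def right_RL_kernel_def by (subst integral_powr_kernel_swap[OF gc \<psi>'c \<alpha>]) simp
  also have "\<dots> = integral {a..b} (\<lambda>t. \<psi> t * R t)"
    using \<Gamma> parts by simp
  finally show ?thesis by (simp add: R_def)
qed

section \<open>First-order and Gronwall estimates\<close>

lemma has_real_derivative_along_segment: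
  fixes L Lt Lz :: "real \<Rightarrow> real^'n \<Rightarrow> real^'n \<Rightarrow> real \<Rightarrow> real"
    and Lx Lv :: "real \<Rightarrow> real^'n \<Rightarrow> real^'n \<Rightarrow> real \<Rightarrow> real^'n"
  assumes L_deriv: "\<forall>t\<in>{a..b}. \<forall>y v w.
         ((\<lambda>(s, y', v', w'). L s y' v' w') has_derivative
            (\<lambda>(ds, dy, dv, dw). Lt t y v w * ds + Lx t y v w \<bullet> dy + Lv t y v w \<bullet> dv + Lz t y v w * dw))
         (at (t, y, v, w) within {a..b} \<times> UNIV)"
    and t: "t \<in> {a..b}"
  shows "((\<lambda>s. L t (y + s *\<^sub>R dy) (v + s *\<^sub>R dv) (w + s * dw)) has_real_derivative
      Lx t (y + s *\<^sub>R dy) (v + s *\<^sub>R dv) (w + s * dw) \<bullet> dy + Lv t (y + s *\<^sub>R dy) (v + s *\<^sub>R dv) (w + s * dw) \<bullet> dv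
      + Lz t (y + s *\<^sub>R dy) (v + s *\<^sub>R dv) (w + s * dw) * dw) (at s)"
proof -
  define p where "p s = (t, y + s *\<^sub>R dy, v + s *\<^sub>R dv, w + s * dw)" for s
  define g where "g = (\<lambda>(s, y', v', w'). L s y' v' w')"
  define g' where "g' q = (case q of (t, y, v, w) \<Rightarrow>
      (\<lambda>(ds, dy, dv, dw). Lt t y v w * ds + Lx t y v w \<bullet> dy + Lv t y v w \<bullet> dv + Lz t y v w * dw))" for q
  have g_deriv: "(g has_derivative g' q) (at q within {a..b} \<times> UNIV)" if "q \<in> {a..b} \<times> UNIV" for q
    using L_deriv that by (cases q) (auto simp: g_def g'_def)
  have p_range: "p ` UNIV \<subseteq> {a..b} \<times> UNIV" using t by (auto simp: p_def)
  have p_deriv: "(p has_derivative (\<lambda>h. (0, h *\<^sub>R dy, h *\<^sub>R dv, h * dw))) (at s)"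
    unfolding p_def by (auto intro!: derivative_eq_intros)
  have "(\<lambda>h. g' (p s) (0, h *\<^sub>R dy, h *\<^sub>R dv, h * dw)) = (*)
      (Lx t (y + s *\<^sub>R dy) (v + s *\<^sub>R dv) (w + s * dw) \<bullet> dy + Lv t (y + s *\<^sub>R dy) (v + s *\<^sub>R dv) (w + s * dw) \<bullet> dv
      + Lz t (y + s *\<^sub>R dy) (v + s *\<^sub>R dv) (w + s * dw) * dw)"
    by (simp add: fun_eq_iff g'_def p_def inner_scaleR_right algebra_simps)
  with has_derivative_in_compose2[OF g_deriv p_range UNIV_I p_deriv] show ?thesis
    by (simp add: g_def p_def has_field_derivative_def)
qed

lemma first_order_remainder_bound:
  fixes L Lt Lz :: "real \<Rightarrow> real^'n \<Rightarrow> real^'n \<Rightarrow> real \<Rightarrow> real"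
    and Lx Lv :: "real \<Rightarrow> real^'n \<Rightarrow> real^'n \<Rightarrow> real \<Rightarrow> real^'n"
  assumes L_deriv: "\<forall>t\<in>{a..b}. \<forall>y v w.
         ((\<lambda>(s, y', v', w'). L s y' v' w') has_derivative
            (\<lambda>(ds, dy, dv, dw). Lt t y v w * ds + Lx t y v w \<bullet> dy + Lv t y v w \<bullet> dv + Lz t y v w * dw))
         (at (t, y, v, w) within {a..b} \<times> UNIV)"
    and t: "t \<in> {a..b}" and K: "0 \<le> K"
    and bx: "\<And>s. s \<in> {0..1} \<Longrightarrow> norm (Lx t (y + s *\<^sub>R dy) (v + s *\<^sub>R dv) (w + s * dw) - Lx t y v w) \<le> K"
    and bv: "\<And>s. s \<in> {0..1} \<Longrightarrow> norm (Lv t (y + s *\<^sub>R dy) (v + s *\<^sub>R dv) (w + s * dw) - Lv t y v w) \<le> K"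
    and bz: "\<And>s. s \<in> {0..1} \<Longrightarrow> \<bar>Lz t (y + s *\<^sub>R dy) (v + s *\<^sub>R dv) (w + s * dw) - Lz t y v w\<bar> \<le> K"
  shows "\<bar>L t (y + dy) (v + dv) (w + dw) - L t y v w - (Lx t y v w \<bullet> dy + Lv t y v w \<bullet> dv + Lz t y v w * dw)\<bar>
           \<le> K * (norm dy + norm dv + \<bar>dw\<bar>)"
proof -
  define c where "c = Lx t y v w \<bullet> dy + Lv t y v w \<bullet> dv + Lz t y v w * dw"
  define D where "D s = Lx t (y + s *\<^sub>R dy) (v + s *\<^sub>R dv) (w + s * dw) \<bullet> dy
     + Lv t (y + s *\<^sub>R dy) (v + s *\<^sub>R dv) (w + s * dw) \<bullet> dv + Lz t (y + s *\<^sub>R dy) (v + s *\<^sub>R dv) (w + s * dw) * dw" for s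
  define f where "f s = L t (y + s *\<^sub>R dy) (v + s *\<^sub>R dv) (w + s * dw) - s * c" for s
  have f_deriv: "(f has_real_derivative D s - c) (at s)" for s
    unfolding f_def D_def
    by (auto intro!: derivative_eq_intros has_real_derivative_along_segment[OF L_deriv t])
  obtain \<xi> where \<xi>: "0 < \<xi>" "\<xi> < 1" and "f 1 - f 0 = (1 - 0) * (D \<xi> - c)"
    using MVT2[OF zero_less_one f_deriv] by blast
  then have remainder: "L t (y + dy) (v + dv) (w + dw) - L t y v w - c = D \<xi> - c"
    by (simp add: f_def)
  have "\<bar>D \<xi> - c\<bar> \<le> \<bar>(Lx t (y + \<xi> *\<^sub>R dy) (v + \<xi> *\<^sub>R dv) (w + \<xi> * dw) - Lx t y v w) \<bullet> dy\<bar>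
      + \<bar>(Lv t (y + \<xi> *\<^sub>R dy) (v + \<xi> *\<^sub>R dv) (w + \<xi> * dw) - Lv t y v w) \<bullet> dv\<bar>
      + \<bar>(Lz t (y + \<xi> *\<^sub>R dy) (v + \<xi> *\<^sub>R dv) (w + \<xi> * dw) - Lz t y v w) * dw\<bar>"
    by (simp add: D_def c_def inner_diff_left algebra_simps)
  also have "\<dots> \<le> K * norm dy + K * norm dv + K * \<bar>dw\<bar>"
    using \<xi> Cauchy_Schwarz_ineq2 by (intro add_mono order_trans[OF Cauchy_Schwarz_ineq2] mult_right_mono bx bv)
      (auto simp: abs_mult intro!: mult_right_mono bz)
  finally show ?thesis
    using remainder by (simp add: c_def distrib_left)
qed

lemma has_real_derivative_sqrt_square_plus:
  fixes d :: "real \<Rightarrow> real"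
  assumes "(d has_real_derivative d') (at s)" and "0 < \<kappa>"
  shows "((\<lambda>s. sqrt ((d s)\<^sup>2 + \<kappa>\<^sup>2)) has_real_derivative d s * d' / sqrt ((d s)\<^sup>2 + \<kappa>\<^sup>2)) (at s)"
proof -
  have "0 < (d s)\<^sup>2 + \<kappa>\<^sup>2" using assms(2) by (simp add: add_nonneg_pos)
  moreover have "((\<lambda>s. (d s)\<^sup>2 + \<kappa>\<^sup>2) has_real_derivative 2 * d s * d') (at s)"
    using assms(1) by (auto intro!: derivative_eq_intros)
  ultimately have "((\<lambda>s. sqrt ((d s)\<^sup>2 + \<kappa>\<^sup>2)) has_real_derivative
      inverse (sqrt ((d s)\<^sup>2 + \<kappa>\<^sup>2)) / 2 * (2 * d s * d')) (at s)"
    by (intro DERIV_chain2[OF DERIV_real_sqrt])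
  then show ?thesis
    by (simp add: inverse_eq_divide)
qed

text \<open>Gronwall's inequality for \<open>\<bar>d\<bar>\<close>, via the decreasing function
  \<open>exp (- B (s - a)) sqrt (d\<^sup>2 + \<kappa>\<^sup>2) - A (s - a)\<close>; the term \<open>\<kappa> > 0\<close> makes the square root differentiable.\<close>
lemma gronwall_abs_bound_smoothed:
  fixes d d' :: "real \<Rightarrow> real"
  assumes aT: "a < T" and dc: "continuous_on {a..T} d" and d0: "d a = 0"
    and dd: "\<And>s. a < s \<Longrightarrow> s < T \<Longrightarrow> (d has_real_derivative d' s) (at s)"
    and db: "\<And>s. a < s \<Longrightarrow> s < T \<Longrightarrow> \<bar>d' s\<bar> \<le> A + B * \<bar>d s\<bar>"
    and A: "0 \<le> A" and B: "0 \<le> B" and \<kappa>: "0 < \<kappa>"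
  shows "\<bar>d T\<bar> \<le> exp (B * (T - a)) * (\<kappa> + A * (T - a))"
proof -
  define q where "q s = sqrt ((d s)\<^sup>2 + \<kappa>\<^sup>2)" for s
  have q_pos: "0 < q s" for s unfolding q_def using \<kappa> by (simp add: add_nonneg_pos)
  have q_ge: "\<bar>d s\<bar> \<le> q s" for s unfolding q_def by (rule real_le_rsqrt) simp
  define \<phi> where "\<phi> s = exp (- B * (s - a)) * q s - A * (s - a)" for s
  define \<phi>' where "\<phi>' s = exp (- B * (s - a)) * (d s * d' s / q s - B * q s) - A" for s
  have \<phi>_cont: "continuous_on {a..T} \<phi>"
    unfolding \<phi>_def q_def by (intro continuous_intros dc)
  have \<phi>_deriv: "(\<phi> has_real_derivative \<phi>' s) (at s)" if "a < s" "s < T" for s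
  proof -
    have "(q has_real_derivative d s * d' s / q s) (at s)"
      unfolding q_def[abs_def] by (rule has_real_derivative_sqrt_square_plus[OF dd[OF that] \<kappa>])
    moreover have "((\<lambda>s. exp (- B * (s - a))) has_real_derivative exp (- B * (s - a)) * (- B)) (at s)"
      by (auto intro!: derivative_eq_intros)
    ultimately have "(\<phi> has_real_derivative exp (- B * (s - a)) * (- B) * q s
        + d s * d' s / q s * exp (- B * (s - a)) - A) (at s)"
      unfolding \<phi>_def by (auto intro!: derivative_eq_intros)
    then show ?thesis
      by (rule DERIV_cong) (simp add: \<phi>'_def algebra_simps)
  qed
  have \<phi>'_nonpos: "\<phi>' s \<le> 0" if "a < s" "s < T" for s
  proof -
    have "d s * d' s / q s \<le> \<bar>d' s\<bar>"
      using q_pos[of s] q_ge[of s] mult_mono[OF q_ge[of s] order_refl, of "\<bar>d' s\<bar>"]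
      by (auto simp: divide_le_eq abs_mult mult.commute intro: abs_ge_self[THEN order_trans])
    also have "\<dots> \<le> A + B * q s" using db[OF that] mult_left_mono[OF q_ge[of s] B] by linarith
    finally have "d s * d' s / q s - B * q s \<le> A" by simp
    then have "\<phi>' s \<le> exp (- B * (s - a)) * A - A"
      by (simp add: \<phi>'_def)
    also have "\<dots> \<le> 0"
      using mult_right_mono[of "exp (- B * (s - a))" 1 A] that A B by simp
    finally show ?thesis .
  qed
  obtain \<xi> where "a < \<xi>" "\<xi> < T" "\<phi> T - \<phi> a = \<phi>' \<xi> * (T - a)"
    using mvt[OF aT \<phi>_cont \<phi>_deriv[unfolded has_field_derivative_def]] by metis
  moreover have "\<phi>' \<xi> * (T - a) \<le> 0"
    using \<phi>'_nonpos[OF \<open>a < \<xi>\<close> \<open>\<xi> < T\<close>] aT by (simp add: mult_nonpos_nonneg)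
  ultimately have "\<phi> T \<le> \<phi> a" by simp
  moreover have "\<phi> a = \<kappa>" using \<kappa> by (simp add: \<phi>_def q_def d0)
  ultimately have "exp (- B * (T - a)) * q T \<le> \<kappa> + A * (T - a)" by (simp add: \<phi>_def)
  then have "exp (B * (T - a)) * (exp (- B * (T - a)) * q T) \<le> exp (B * (T - a)) * (\<kappa> + A * (T - a))"
    by (intro mult_left_mono) auto
  then have "q T \<le> exp (B * (T - a)) * (\<kappa> + A * (T - a))"
    by (simp add: mult.assoc[symmetric] exp_add[symmetric])
  then show ?thesis using q_ge[of T] by simp
qed

lemma gronwall_abs_bound:
  fixes d d' :: "real \<Rightarrow> real"
  assumes aT: "a < T" and dc: "continuous_on {a..T} d" and d0: "d a = 0"
    and dd: "\<And>s. a < s \<Longrightarrow> s < T \<Longrightarrow> (d has_real_derivative d' s) (at s)"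
    and db: "\<And>s. a < s \<Longrightarrow> s < T \<Longrightarrow> \<bar>d' s\<bar> \<le> A + B * \<bar>d s\<bar>"
    and A: "0 \<le> A" and B: "0 \<le> B"
  shows "\<bar>d T\<bar> \<le> A * (T - a) * exp (B * (T - a))"
proof (rule field_le_epsilon)
  fix \<epsilon> :: real assume "\<epsilon> > 0"
  define \<kappa> where "\<kappa> = \<epsilon> / exp (B * (T - a))"
  have "\<kappa> > 0" using \<open>\<epsilon> > 0\<close> by (simp add: \<kappa>_def)
  have "\<bar>d T\<bar> \<le> exp (B * (T - a)) * (\<kappa> + A * (T - a))"
    by (rule gronwall_abs_bound_smoothed[OF aT dc d0 dd db A B \<open>\<kappa> > 0\<close>])
  also have "\<dots> = A * (T - a) * exp (B * (T - a)) + \<epsilon>"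
    by (simp add: \<kappa>_def algebra_simps)
  finally show "\<bar>d T\<bar> \<le> A * (T - a) * exp (B * (T - a)) + \<epsilon>" .
qed

text \<open>A priori bound by continuity: the growth condition is only needed while \<open>\<bar>d\<bar> \<le> 1\<close>,
  and the resulting bound keeps \<open>\<bar>d\<bar>\<close> below \<open>1\<close>, so the first time \<open>\<bar>d\<bar>\<close> reaches \<open>1\<close> never comes.\<close>
lemma gronwall_abs_bound_local:
  fixes d d' :: "real \<Rightarrow> real"
  assumes dc: "continuous_on {a..b} d" and d0: "d a = 0"
    and dd: "\<And>s. a < s \<Longrightarrow> s < b \<Longrightarrow> (d has_real_derivative d' s) (at s)"
    and db: "\<And>s. a < s \<Longrightarrow> s < b \<Longrightarrow> \<bar>d s\<bar> \<le> 1 \<Longrightarrow> \<bar>d' s\<bar> \<le> A + B * \<bar>d s\<bar>"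
    and A: "0 \<le> A" and B: "0 \<le> B" and small: "A * (b - a) * exp (B * (b - a)) < 1"
    and t: "t \<in> {a..b}"
  shows "\<bar>d t\<bar> \<le> A * (b - a) * exp (B * (b - a))"
proof -
  define K where "K = A * (b - a) * exp (B * (b - a))"
  have bound: "\<bar>d T\<bar> \<le> K" if T: "a < T" "T \<le> b" and below: "\<And>s. a < s \<Longrightarrow> s < T \<Longrightarrow> \<bar>d s\<bar> \<le> 1" for T
  proof -
    have "\<bar>d T\<bar> \<le> A * (T - a) * exp (B * (T - a))"
      using T below by (intro gronwall_abs_bound[OF T(1) continuous_on_subset[OF dc] d0 dd db A B]) auto
    also have "\<dots> \<le> K"
      unfolding K_def using T A B by (intro mult_mono) (auto simp: mult_left_mono)
    finally show ?thesis .
  qed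
  have "\<bar>d s\<bar> < 1" if s: "s \<in> {a..b}" for s
  proof (rule ccontr)
    assume "\<not> \<bar>d s\<bar> < 1"
    define S where "S = {a..b} \<inter> (\<lambda>t. \<bar>d t\<bar>) -` {1..}"
    have "s \<in> S" using \<open>\<not> \<bar>d s\<bar> < 1\<close> s by (auto simp: S_def)
    have "closed S" unfolding S_def
      by (intro continuous_closed_preimage continuous_intros dc closed_atLeast closed_atLeastAtMost)
    have "bdd_below S" unfolding S_def by (rule bdd_belowI[of _ a]) auto
    define T where "T = Inf S"
    have "T \<in> S"
      unfolding T_def using closed_contains_Inf[OF _ \<open>bdd_below S\<close> \<open>closed S\<close>] \<open>s \<in> S\<close> by blast
    then have T: "T \<in> {a..b}" "1 \<le> \<bar>d T\<bar>" by (auto simp: S_def)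
    then have "a < T" using d0 by (cases "T = a") auto
    have "\<bar>d r\<bar> \<le> 1" if "a < r" "r < T" for r
    proof -
      have "r \<notin> S" using cInf_lower[OF _ \<open>bdd_below S\<close>, of r] that by (auto simp: T_def)
      then show ?thesis using that T by (auto simp: S_def)
    qed
    then have "\<bar>d T\<bar> \<le> K" using \<open>a < T\<close> T by (intro bound) auto
    then show False using T small by (simp add: K_def)
  qed
  then show ?thesis
    using t bound[of t] d0 A B by (cases "t = a") (auto simp: K_def less_imp_le)
qed

section \<open>The first variation of a Herglotz problem\<close>

lemma eventually_at_zero_abs_less:
  assumes "0 < r"
  shows "\<forall>\<^sub>F e in at (0::real). \<bar>e\<bar> < r"
  using assms by (auto simp: eventually_at intro!: exI[of _ r])

lemma tendsto_quotient_at_0_zero: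
  fixes R :: "real \<Rightarrow> real"
  assumes small: "\<And>\<gamma>. 0 < \<gamma> \<Longrightarrow> \<forall>\<^sub>F e in at 0. \<bar>R e\<bar> \<le> \<gamma> * \<bar>e\<bar>"
  shows "((\<lambda>e. R e / e) \<longlongrightarrow> 0) (at 0)"
proof (rule tendstoI)
  fix \<epsilon> :: real assume "0 < \<epsilon>"
  have "\<bar>R e\<bar> / \<bar>e\<bar> < \<epsilon>" if "\<bar>R e\<bar> \<le> \<epsilon> / 2 * \<bar>e\<bar>" "e \<noteq> 0" for e
  proof -
    have "0 < \<epsilon> * \<bar>e\<bar>" using that(2) \<open>0 < \<epsilon>\<close> by simp
    then have "\<bar>R e\<bar> < \<epsilon> * \<bar>e\<bar>" using that(1) by linarith
    then show ?thesis using that(2) by (simp add: pos_divide_less_eq)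
  qed
  with eventually_conj[OF small[of "\<epsilon> / 2"] eventually_neq_at_within[of 0 0 UNIV]] \<open>0 < \<epsilon>\<close>
  show "\<forall>\<^sub>F e in at 0. dist (R e / e) 0 < \<epsilon>"
    by (auto elim!: eventually_mono simp: abs_divide)
qed

lemma continuous_on_along_path:
  assumes "continuous_on ({a..b} \<times> UNIV) (\<lambda>(t, y, v, w). F t y v w)"
    and "continuous_on {a..b} X" "continuous_on {a..b} V" "continuous_on {a..b} Z"
  shows "continuous_on {a..b} (\<lambda>t. F t (X t) (V t) (Z t))"
proof -
  have "continuous_on {a..b} (\<lambda>t. (t, X t, V t, Z t))"
    using assms(2-4) by (intro continuous_intros)
  from continuous_on_compose2[OF assms(1) this] show ?thesis by auto
qed

text \<open>In the application \<open>V\<close> and \<open>V\<eta>\<close> are the Caputo derivatives of \<open>X\<close> and \<open>\<eta>\<close>.\<close>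
locale herglotz_perturbation =
  fixes a b za \<delta> :: real
    and L Lt Lz :: "real \<Rightarrow> real^'n \<Rightarrow> real^'n \<Rightarrow> real \<Rightarrow> real"
    and Lx Lv :: "real \<Rightarrow> real^'n \<Rightarrow> real^'n \<Rightarrow> real \<Rightarrow> real^'n"
    and X V \<eta> V\<eta> :: "real \<Rightarrow> real^'n"
    and z :: "real \<Rightarrow> real \<Rightarrow> real"
  assumes ab: "a < b"
    and L_deriv: "\<forall>t\<in>{a..b}. \<forall>y v w.
         ((\<lambda>(s, y', v', w'). L s y' v' w') has_derivative
            (\<lambda>(ds, dy, dv, dw). Lt t y v w * ds + Lx t y v w \<bullet> dy + Lv t y v w \<bullet> dv + Lz t y v w * dw))
         (at (t, y, v, w) within {a..b} \<times> UNIV)"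
    and Lx_cont: "continuous_on ({a..b} \<times> UNIV) (\<lambda>(t, y, v, w). Lx t y v w)"
    and Lv_cont: "continuous_on ({a..b} \<times> UNIV) (\<lambda>(t, y, v, w). Lv t y v w)"
    and Lz_cont: "continuous_on ({a..b} \<times> UNIV) (\<lambda>(t, y, v, w). Lz t y v w)"
    and X_cont: "continuous_on {a..b} X" and V_cont: "continuous_on {a..b} V"
    and \<eta>_cont: "continuous_on {a..b} \<eta>" and V\<eta>_cont: "continuous_on {a..b} V\<eta>"
    and \<delta>: "0 < \<delta>"
    and z_init: "\<And>e. \<bar>e\<bar> < \<delta> \<Longrightarrow> z e a = za"
    and z_ode: "\<And>e t. \<bar>e\<bar> < \<delta> \<Longrightarrow> t \<in> {a..b} \<Longrightarrow>
        (z e has_real_derivative L t (X t + e *\<^sub>R \<eta> t) (V t + e *\<^sub>R V\<eta> t) (z e t)) (at t within {a..b})"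
begin

definition Lx0 :: "real \<Rightarrow> real^'n" where "Lx0 t = Lx t (X t) (V t) (z 0 t)"
definition Lv0 :: "real \<Rightarrow> real^'n" where "Lv0 t = Lv t (X t) (V t) (z 0 t)"
definition Lz0 :: "real \<Rightarrow> real" where "Lz0 t = Lz t (X t) (V t) (z 0 t)"

definition lam :: "real \<Rightarrow> real" where "lam t = exp (- integral {a..t} Lz0)"

definition Lvar :: "real \<Rightarrow> real" where "Lvar t = Lx0 t \<bullet> \<eta> t + Lv0 t \<bullet> V\<eta> t"

definition Lpert :: "real \<Rightarrow> real \<Rightarrow> real" where
  "Lpert e t = L t (X t + e *\<^sub>R \<eta> t) (V t + e *\<^sub>R V\<eta> t) (z e t)"

definition dz :: "real \<Rightarrow> real \<Rightarrow> real" where "dz e t = z e t - z 0 t"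

text \<open>A compact neighbourhood of the unperturbed curve containing every segment used below; the
  partial derivatives of \<open>L\<close> are bounded and uniformly continuous on it.\<close>
definition tube :: "(real \<times> (real^'n) \<times> (real^'n) \<times> real) set" where
  "tube = (\<lambda>(t, e, r). (t, X t + e *\<^sub>R \<eta> t, V t + e *\<^sub>R V\<eta> t, z 0 t + r)) ` ({a..b} \<times> {-1..1} \<times> {-1..1})"

lemma z_continuous: "\<bar>e\<bar> < \<delta> \<Longrightarrow> continuous_on {a..b} (z e)"
  using DERIV_continuous[OF z_ode] by (auto simp: continuous_on_eq_continuous_within)

lemma continuous_on_along_z0:
  assumes "continuous_on ({a..b} \<times> UNIV) (\<lambda>(t, y, v, w). F t y v w)"
  shows "continuous_on {a..b} (\<lambda>t. F t (X t) (V t) (z 0 t))"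
  using \<delta> by (intro continuous_on_along_path[OF assms X_cont V_cont z_continuous]) auto

lemma continuous_Lx0: "continuous_on {a..b} Lx0"
  using continuous_on_along_z0[OF Lx_cont] by (simp add: Lx0_def[abs_def])

lemma continuous_Lv0: "continuous_on {a..b} Lv0"
  using continuous_on_along_z0[OF Lv_cont] by (simp add: Lv0_def[abs_def])

lemma continuous_Lz0: "continuous_on {a..b} Lz0"
  using continuous_on_along_z0[OF Lz_cont] by (simp add: Lz0_def[abs_def])

lemma continuous_Lvar: "continuous_on {a..b} Lvar"
  unfolding Lvar_def[abs_def] by (intro continuous_intros continuous_Lx0 continuous_Lv0 \<eta>_cont V\<eta>_cont)

lemma lam_has_real_derivative:
  "t \<in> {a..b} \<Longrightarrow> (lam has_real_derivative - lam t * Lz0 t) (at t within {a..b})"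
  using integral_has_vector_derivative[OF continuous_Lz0]
  unfolding lam_def[abs_def] has_real_derivative_iff_has_vector_derivative[symmetric]
  by (auto intro!: derivative_eq_intros)

lemma continuous_lam: "continuous_on {a..b} lam"
  using DERIV_continuous[OF lam_has_real_derivative] by (auto simp: continuous_on_eq_continuous_within)

lemma compact_tube: "compact tube"
proof -
  have fst_comp: "continuous_on ({a..b} \<times> S) (\<lambda>p. h (fst p))" if "continuous_on {a..b} h"
    for h :: "real \<Rightarrow> 'b::topological_space" and S :: "'c::topological_space set"
    by (rule continuous_on_compose2[OF that continuous_on_fst]) auto
  have "continuous_on ({a..b} \<times> {-1..1} \<times> {-1..1}) (\<lambda>p. (fst p, X (fst p) + fst (snd p) *\<^sub>R \<eta> (fst p),
      V (fst p) + fst (snd p) *\<^sub>R V\<eta> (fst p), z 0 (fst p) + snd (snd p)))"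
    using \<delta> by (intro continuous_intros fst_comp X_cont V_cont \<eta>_cont V\<eta>_cont z_continuous) auto
  then show ?thesis
    unfolding tube_def by (intro compact_continuous_image compact_Times compact_Icc) (simp add: case_prod_beta')
qed

lemma tube_subset: "tube \<subseteq> {a..b} \<times> UNIV"
  by (auto simp: tube_def)

lemma in_tube:
  "t \<in> {a..b} \<Longrightarrow> \<bar>e\<bar> \<le> 1 \<Longrightarrow> \<bar>r\<bar> \<le> 1 \<Longrightarrow> (t, X t + e *\<^sub>R \<eta> t, V t + e *\<^sub>R V\<eta> t, z 0 t + r) \<in> tube"
  unfolding tube_def by (rule image_eqI[where x = "(t, e, r)"]) auto

lemma dz_init: "\<bar>e\<bar> < \<delta> \<Longrightarrow> dz e a = 0"
  using z_init[of e] z_init[of 0] \<delta> by (simp add: dz_def)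

lemma dz_has_real_derivative:
  "\<bar>e\<bar> < \<delta> \<Longrightarrow> t \<in> {a..b} \<Longrightarrow> (dz e has_real_derivative Lpert e t - Lpert 0 t) (at t within {a..b})"
  using DERIV_diff[OF z_ode z_ode[of 0]] \<delta> by (simp add: dz_def[abs_def] Lpert_def)

lemma dz_continuous: "\<bar>e\<bar> < \<delta> \<Longrightarrow> continuous_on {a..b} (dz e)"
  unfolding dz_def[abs_def] using \<delta> by (intro continuous_intros z_continuous) auto

lemma Lpert_remainder_bound:
  assumes t: "t \<in> {a..b}" and K: "0 \<le> K"
    and seg: "\<And>s. s \<in> {0..1} \<Longrightarrow>
       norm (Lx t (X t + (s * e) *\<^sub>R \<eta> t) (V t + (s * e) *\<^sub>R V\<eta> t) (z 0 t + s * dz e t) - Lx0 t) \<le> K \<and>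
       norm (Lv t (X t + (s * e) *\<^sub>R \<eta> t) (V t + (s * e) *\<^sub>R V\<eta> t) (z 0 t + s * dz e t) - Lv0 t) \<le> K \<and>
       \<bar>Lz t (X t + (s * e) *\<^sub>R \<eta> t) (V t + (s * e) *\<^sub>R V\<eta> t) (z 0 t + s * dz e t) - Lz0 t\<bar> \<le> K"
  shows "\<bar>Lpert e t - Lpert 0 t - (e * Lvar t + Lz0 t * dz e t)\<bar>
           \<le> K * (\<bar>e\<bar> * (norm (\<eta> t) + norm (V\<eta> t)) + \<bar>dz e t\<bar>)"
proof -
  have "\<bar>L t (X t + e *\<^sub>R \<eta> t) (V t + e *\<^sub>R V\<eta> t) (z 0 t + dz e t) - L t (X t) (V t) (z 0 t)
      - (Lx0 t \<bullet> (e *\<^sub>R \<eta> t) + Lv0 t \<bullet> (e *\<^sub>R V\<eta> t) + Lz0 t * dz e t)\<bar>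
      \<le> K * (norm (e *\<^sub>R \<eta> t) + norm (e *\<^sub>R V\<eta> t) + \<bar>dz e t\<bar>)"
    unfolding Lx0_def Lv0_def Lz0_def
    by (rule first_order_remainder_bound[OF L_deriv t K]) (use seg in \<open>auto simp: Lx0_def Lv0_def Lz0_def\<close>)
  then show ?thesis
    by (simp add: Lpert_def dz_def Lvar_def inner_scaleR_right distrib_left mult.assoc)
qed

lemma tube_partials_bounded:
  obtains M where "0 \<le> M"
    "\<And>t y v w. (t, y, v, w) \<in> tube \<Longrightarrow> norm (Lx t y v w) \<le> M \<and> norm (Lv t y v w) \<le> M \<and> \<bar>Lz t y v w\<bar> \<le> M"
proof -
  have cont: "continuous_on tube (\<lambda>(t, y, v, w). (Lx t y v w, Lv t y v w, Lz t y v w))"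
    using continuous_on_subset[OF Lx_cont tube_subset] continuous_on_subset[OF Lv_cont tube_subset]
      continuous_on_subset[OF Lz_cont tube_subset]
    by (auto intro: continuous_on_Pair simp: case_prod_beta')
  obtain M where "0 \<le> M" and M: "\<And>p. p \<in> tube \<Longrightarrow>
      norm ((\<lambda>(t, y, v, w). (Lx t y v w, Lv t y v w, Lz t y v w)) p) \<le> M"
    using continuous_on_compact_bound[OF compact_tube cont] by blast
  show ?thesis
  proof (rule that[OF \<open>0 \<le> M\<close>])
    fix t y v w assume "(t, y, v, w) \<in> tube"
    then have "norm (Lx t y v w, Lv t y v w, Lz t y v w) \<le> M" using M by fastforce
    then show "norm (Lx t y v w) \<le> M \<and> norm (Lv t y v w) \<le> M \<and> \<bar>Lz t y v w\<bar> \<le> M"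
      by (smt (verit) norm_fst_le norm_snd_le real_norm_def)
  qed
qed

lemma tube_partials_modulus:
  assumes "0 < \<gamma>"
  obtains \<rho> where "0 < \<rho>"
    "\<And>t y v w y' v' w'. (t, y, v, w) \<in> tube \<Longrightarrow> (t, y', v', w') \<in> tube \<Longrightarrow>
       norm (y' - y) + norm (v' - v) + \<bar>w' - w\<bar> < \<rho> \<Longrightarrow>
       norm (Lx t y' v' w' - Lx t y v w) \<le> \<gamma> \<and> norm (Lv t y' v' w' - Lv t y v w) \<le> \<gamma> \<and>
       \<bar>Lz t y' v' w' - Lz t y v w\<bar> \<le> \<gamma>"
proof -
  define Fx where "Fx = (\<lambda>(t, y, v, w). Lx t y v w)"
  define Fv where "Fv = (\<lambda>(t, y, v, w). Lv t y v w)"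
  define Fz where "Fz = (\<lambda>(t, y, v, w). Lz t y v w)"
  have "uniformly_continuous_on tube F" if "continuous_on ({a..b} \<times> UNIV) F" for F :: "_ \<Rightarrow> 'b::metric_space"
    using compact_uniformly_continuous[OF continuous_on_subset[OF that tube_subset] compact_tube] .
  then have ux: "uniformly_continuous_on tube Fx" and uv: "uniformly_continuous_on tube Fv"
    and uz: "uniformly_continuous_on tube Fz"
    using Lx_cont Lv_cont Lz_cont by (simp_all add: Fx_def Fv_def Fz_def)
  obtain \<rho>1 where "0 < \<rho>1" "\<forall>p\<in>tube. \<forall>q\<in>tube. dist q p < \<rho>1 \<longrightarrow> dist (Fx q) (Fx p) < \<gamma>"
    using ux assms unfolding uniformly_continuous_on_def by blast
  moreover obtain \<rho>2 where "0 < \<rho>2" "\<forall>p\<in>tube. \<forall>q\<in>tube. dist q p < \<rho>2 \<longrightarrow> dist (Fv q) (Fv p) < \<gamma>"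
    using uv assms unfolding uniformly_continuous_on_def by blast
  moreover obtain \<rho>3 where "0 < \<rho>3" "\<forall>p\<in>tube. \<forall>q\<in>tube. dist q p < \<rho>3 \<longrightarrow> dist (Fz q) (Fz p) < \<gamma>"
    using uz assms unfolding uniformly_continuous_on_def by blast
  ultimately have \<rho>: "0 < \<rho>1" "0 < \<rho>2" "0 < \<rho>3"
    and uc: "\<forall>p\<in>tube. \<forall>q\<in>tube. dist q p < \<rho>1 \<longrightarrow> dist (Fx q) (Fx p) < \<gamma>"
      "\<forall>p\<in>tube. \<forall>q\<in>tube. dist q p < \<rho>2 \<longrightarrow> dist (Fv q) (Fv p) < \<gamma>"
      "\<forall>p\<in>tube. \<forall>q\<in>tube. dist q p < \<rho>3 \<longrightarrow> dist (Fz q) (Fz p) < \<gamma>"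
    by auto
  show ?thesis
  proof (rule that[of "min \<rho>1 (min \<rho>2 \<rho>3)"])
    fix t y v w y' v' w'
    assume p: "(t, y, v, w) \<in> tube" and q: "(t, y', v', w') \<in> tube"
      and close: "norm (y' - y) + norm (v' - v) + \<bar>w' - w\<bar> < min \<rho>1 (min \<rho>2 \<rho>3)"
    have "dist (t, y', v', w') (t, y, v, w) \<le> norm (y' - y) + norm (v' - v) + \<bar>w' - w\<bar>"
      using norm_Pair_le[of "y' - y" "(v' - v, w' - w)"] norm_Pair_le[of "v' - v" "w' - w"]
      by (simp add: dist_norm)
    with close have "dist (t, y', v', w') (t, y, v, w) < \<rho>1" "dist (t, y', v', w') (t, y, v, w) < \<rho>2"
      "dist (t, y', v', w') (t, y, v, w) < \<rho>3"
      by linarith+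
    with uc p q have "dist (Fx (t, y', v', w')) (Fx (t, y, v, w)) < \<gamma>"
      "dist (Fv (t, y', v', w')) (Fv (t, y, v, w)) < \<gamma>" "dist (Fz (t, y', v', w')) (Fz (t, y, v, w)) < \<gamma>"
      by blast+
    then show "norm (Lx t y' v' w' - Lx t y v w) \<le> \<gamma> \<and> norm (Lv t y' v' w' - Lv t y v w) \<le> \<gamma> \<and>
       \<bar>Lz t y' v' w' - Lz t y v w\<bar> \<le> \<gamma>"
      by (simp add: Fx_def Fv_def Fz_def dist_norm)
  qed (use \<rho> in auto)
qed

lemma variation_norm_bounded:
  obtains N where "0 \<le> N" "\<And>t. t \<in> {a..b} \<Longrightarrow> norm (\<eta> t) + norm (V\<eta> t) \<le> N"
proof -
  have "continuous_on {a..b} (\<lambda>t. norm (\<eta> t) + norm (V\<eta> t))"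
    by (intro continuous_intros \<eta>_cont V\<eta>_cont)
  then obtain N where "0 \<le> N" "\<And>t. t \<in> {a..b} \<Longrightarrow> norm (norm (\<eta> t) + norm (V\<eta> t)) \<le> N"
    using continuous_on_compact_bound[OF compact_Icc] by blast
  then show ?thesis by (intro that[of N]) auto
qed

lemma Lpert_diff_bound:
  obtains M where "0 \<le> M"
    "\<And>e t. t \<in> {a..b} \<Longrightarrow> \<bar>e\<bar> \<le> 1 \<Longrightarrow> \<bar>dz e t\<bar> \<le> 1 \<Longrightarrow> \<bar>Lpert e t - Lpert 0 t\<bar> \<le> M * (\<bar>e\<bar> + \<bar>dz e t\<bar>)"
proof -
  obtain M where M0: "0 \<le> M" and M: "\<And>t y v w. (t, y, v, w) \<in> tube \<Longrightarrow>
      norm (Lx t y v w) \<le> M \<and> norm (Lv t y v w) \<le> M \<and> \<bar>Lz t y v w\<bar> \<le> M"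
    using tube_partials_bounded by blast
  obtain N where N0: "0 \<le> N" and N: "\<And>t. t \<in> {a..b} \<Longrightarrow> norm (\<eta> t) + norm (V\<eta> t) \<le> N"
    using variation_norm_bounded by blast
  show ?thesis
  proof (rule that[of "3 * M * (N + 1)"])
    show "0 \<le> 3 * M * (N + 1)" using M0 N0 by simp
    fix e t assume t: "t \<in> {a..b}" and e: "\<bar>e\<bar> \<le> 1" and d: "\<bar>dz e t\<bar> \<le> 1"
    define n where "n = norm (\<eta> t) + norm (V\<eta> t)"
    have M_base: "norm (Lx0 t) \<le> M" "norm (Lv0 t) \<le> M" "\<bar>Lz0 t\<bar> \<le> M"
      using M[OF in_tube[OF t, of 0 0]] by (auto simp: Lx0_def Lv0_def Lz0_def)
    have "\<bar>Lpert e t - Lpert 0 t - (e * Lvar t + Lz0 t * dz e t)\<bar> \<le> (2 * M) * (\<bar>e\<bar> * n + \<bar>dz e t\<bar>)"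
      unfolding n_def
    proof (rule Lpert_remainder_bound[OF t])
      fix s :: real assume "s \<in> {0..1}"
      then have "\<bar>s * e\<bar> \<le> 1" "\<bar>s * dz e t\<bar> \<le> 1"
        using e d by (auto simp: abs_mult intro: mult_le_one)
      from M[OF in_tube[OF t this]] M_base
      show "norm (Lx t (X t + (s * e) *\<^sub>R \<eta> t) (V t + (s * e) *\<^sub>R V\<eta> t) (z 0 t + s * dz e t) - Lx0 t) \<le> 2 * M \<and>
          norm (Lv t (X t + (s * e) *\<^sub>R \<eta> t) (V t + (s * e) *\<^sub>R V\<eta> t) (z 0 t + s * dz e t) - Lv0 t) \<le> 2 * M \<and>
          \<bar>Lz t (X t + (s * e) *\<^sub>R \<eta> t) (V t + (s * e) *\<^sub>R V\<eta> t) (z 0 t + s * dz e t) - Lz0 t\<bar> \<le> 2 * M"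
        by (auto intro: norm_triangle_le_diff[THEN order_trans] simp: norm_triangle_ineq4)
    qed (use M0 in simp)
    moreover have "\<bar>e * Lvar t + Lz0 t * dz e t\<bar> \<le> M * (\<bar>e\<bar> * n + \<bar>dz e t\<bar>)"
    proof -
      have "\<bar>Lvar t\<bar> \<le> M * n"
        unfolding Lvar_def n_def distrib_left
        using Cauchy_Schwarz_ineq2[of "Lx0 t" "\<eta> t"] Cauchy_Schwarz_ineq2[of "Lv0 t" "V\<eta> t"]
          mult_right_mono[OF M_base(1), of "norm (\<eta> t)"] mult_right_mono[OF M_base(2), of "norm (V\<eta> t)"]
        by auto
      then have "\<bar>e * Lvar t\<bar> \<le> M * (\<bar>e\<bar> * n)"
        using mult_left_mono[of "\<bar>Lvar t\<bar>" "M * n" "\<bar>e\<bar>"] by (simp add: abs_mult mult.left_commute)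
      moreover have "\<bar>Lz0 t * dz e t\<bar> \<le> M * \<bar>dz e t\<bar>"
        unfolding abs_mult by (intro mult_right_mono M_base) simp
      ultimately show ?thesis by (simp add: distrib_left abs_triangle_ineq[THEN order_trans])
    qed
    ultimately have "\<bar>Lpert e t - Lpert 0 t\<bar> \<le> 3 * M * (\<bar>e\<bar> * n + \<bar>dz e t\<bar>)"
      by linarith
    also have "\<dots> \<le> 3 * M * (N + 1) * (\<bar>e\<bar> + \<bar>dz e t\<bar>)"
    proof -
      have "\<bar>e\<bar> * n \<le> (N + 1) * \<bar>e\<bar>"
        using mult_left_mono[of n "N + 1" "\<bar>e\<bar>"] N[OF t] by (simp add: n_def mult.commute)
      moreover have "\<bar>dz e t\<bar> \<le> (N + 1) * \<bar>dz e t\<bar>" using N0 by (simp add: mult_le_cancel_right1)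
      ultimately have "\<bar>e\<bar> * n + \<bar>dz e t\<bar> \<le> (N + 1) * (\<bar>e\<bar> + \<bar>dz e t\<bar>)"
        by (simp add: distrib_left)
      then show ?thesis using M0 by (simp add: mult_left_mono mult.assoc)
    qed
    finally show "\<bar>Lpert e t - Lpert 0 t\<bar> \<le> 3 * M * (N + 1) * (\<bar>e\<bar> + \<bar>dz e t\<bar>)" .
  qed
qed

lemma dz_lipschitz:
  obtains C where "0 \<le> C" "\<forall>\<^sub>F e in at 0. \<forall>t\<in>{a..b}. \<bar>dz e t\<bar> \<le> C * \<bar>e\<bar>"
proof -
  obtain M where M0: "0 \<le> M" and M: "\<And>e t. t \<in> {a..b} \<Longrightarrow> \<bar>e\<bar> \<le> 1 \<Longrightarrow> \<bar>dz e t\<bar> \<le> 1 \<Longrightarrow>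
      \<bar>Lpert e t - Lpert 0 t\<bar> \<le> M * (\<bar>e\<bar> + \<bar>dz e t\<bar>)"
    using Lpert_diff_bound by blast
  define C where "C = M * (b - a) * exp (M * (b - a))"
  have C0: "0 \<le> C" using M0 ab by (simp add: C_def)
  have "\<forall>\<^sub>F e in at 0. \<bar>e\<bar> < \<delta> \<and> \<bar>e\<bar> < 1 \<and> \<bar>e\<bar> < 1 / (C + 1)"
    using \<delta> C0 by (intro eventually_conj eventually_at_zero_abs_less) auto
  then have "\<forall>\<^sub>F e in at 0. \<forall>t\<in>{a..b}. \<bar>dz e t\<bar> \<le> C * \<bar>e\<bar>"
  proof (rule eventually_mono, intro ballI)
    fix e t assume e: "\<bar>e\<bar> < \<delta> \<and> \<bar>e\<bar> < 1 \<and> \<bar>e\<bar> < 1 / (C + 1)" and t: "t \<in> {a..b}"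
    have "C * \<bar>e\<bar> < 1"
    proof -
      have "C * \<bar>e\<bar> \<le> (C + 1) * \<bar>e\<bar>" by (simp add: mult_right_mono)
      also have "\<dots> < 1" using e C0 by (simp add: field_simps)
      finally show ?thesis .
    qed
    have "\<bar>dz e t\<bar> \<le> M * \<bar>e\<bar> * (b - a) * exp (M * (b - a))"
    proof (rule gronwall_abs_bound_local[OF dz_continuous dz_init _ _ _ M0 _ t])
      fix s assume s: "a < s" "s < b"
      then show "(dz e has_real_derivative Lpert e s - Lpert 0 s) (at s)"
        using dz_has_real_derivative[of e s] e at_within_Icc_at[of a s b] by auto
      assume "\<bar>dz e s\<bar> \<le> 1"
      then show "\<bar>Lpert e s - Lpert 0 s\<bar> \<le> M * \<bar>e\<bar> + M * \<bar>dz e s\<bar>"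
        using M[of s e] s e by (simp add: distrib_left)
    next
      show "M * \<bar>e\<bar> * (b - a) * exp (M * (b - a)) < 1"
        using \<open>C * \<bar>e\<bar> < 1\<close> by (simp add: C_def mult_ac)
    qed (use e M0 in auto)
    then show "\<bar>dz e t\<bar> \<le> C * \<bar>e\<bar>" by (simp add: C_def mult_ac)
  qed
  then show ?thesis using C0 that by blast
qed

lemma Lpert_linearization:
  assumes "0 < \<gamma>"
  shows "\<forall>\<^sub>F e in at 0. \<forall>t\<in>{a..b}. \<bar>Lpert e t - Lpert 0 t - (e * Lvar t + Lz0 t * dz e t)\<bar> \<le> \<gamma> * \<bar>e\<bar>"
proof -
  obtain C where C0: "0 \<le> C" and C: "\<forall>\<^sub>F e in at 0. \<forall>t\<in>{a..b}. \<bar>dz e t\<bar> \<le> C * \<bar>e\<bar>"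
    using dz_lipschitz by blast
  obtain N where N0: "0 \<le> N" and N: "\<And>t. t \<in> {a..b} \<Longrightarrow> norm (\<eta> t) + norm (V\<eta> t) \<le> N"
    using variation_norm_bounded by blast
  define \<gamma>' where "\<gamma>' = \<gamma> / (N + C + 1)"
  have \<gamma>': "0 < \<gamma>'" "\<gamma>' * (N + C) \<le> \<gamma>"
    using assms N0 C0 by (auto simp: \<gamma>'_def field_simps)
  obtain \<rho> where \<rho>: "0 < \<rho>" and modulus: "\<And>t y v w y' v' w'. (t, y, v, w) \<in> tube \<Longrightarrow> (t, y', v', w') \<in> tube \<Longrightarrow>
       norm (y' - y) + norm (v' - v) + \<bar>w' - w\<bar> < \<rho> \<Longrightarrow>
       norm (Lx t y' v' w' - Lx t y v w) \<le> \<gamma>' \<and> norm (Lv t y' v' w' - Lv t y v w) \<le> \<gamma>' \<and>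
       \<bar>Lz t y' v' w' - Lz t y v w\<bar> \<le> \<gamma>'"
    using tube_partials_modulus[OF \<gamma>'(1)] by blast
  have "\<forall>\<^sub>F e in at 0. (\<forall>t\<in>{a..b}. \<bar>dz e t\<bar> \<le> C * \<bar>e\<bar>) \<and> \<bar>e\<bar> < 1 / (C + 1) \<and> \<bar>e\<bar> < \<rho> / (N + C + 1)"
    using C C0 N0 \<rho> by (intro eventually_conj eventually_at_zero_abs_less) auto
  then show ?thesis
  proof (rule eventually_mono, intro ballI)
    fix e t assume e: "(\<forall>t\<in>{a..b}. \<bar>dz e t\<bar> \<le> C * \<bar>e\<bar>) \<and> \<bar>e\<bar> < 1 / (C + 1) \<and> \<bar>e\<bar> < \<rho> / (N + C + 1)"
      and t: "t \<in> {a..b}"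
    have dz_t: "\<bar>dz e t\<bar> \<le> C * \<bar>e\<bar>" using e t by blast
    have "C * \<bar>e\<bar> \<le> (C + 1) * \<bar>e\<bar>" "(C + 1) * \<bar>e\<bar> < 1" "(N + C + 1) * \<bar>e\<bar> < \<rho>"
      using e C0 N0 by (auto simp: field_simps)
    then have e1: "\<bar>e\<bar> \<le> 1" and d1: "\<bar>dz e t\<bar> \<le> 1" and close: "\<bar>e\<bar> * N + C * \<bar>e\<bar> < \<rho>"
      using dz_t N0 by (auto simp: algebra_simps)
    have "\<bar>Lpert e t - Lpert 0 t - (e * Lvar t + Lz0 t * dz e t)\<bar> \<le> \<gamma>' * (\<bar>e\<bar> * (norm (\<eta> t) + norm (V\<eta> t)) + \<bar>dz e t\<bar>)"
    proof (rule Lpert_remainder_bound[OF t less_imp_le[OF \<gamma>'(1)]])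
      fix s :: real assume s: "s \<in> {0..1}"
      then have s_small: "\<bar>s * e\<bar> \<le> \<bar>e\<bar>" "\<bar>s * dz e t\<bar> \<le> \<bar>dz e t\<bar>"
        by (auto simp: abs_mult intro: mult_left_le_one_le)
      have "norm ((s * e) *\<^sub>R \<eta> t) + norm ((s * e) *\<^sub>R V\<eta> t) + \<bar>s * dz e t\<bar> \<le> \<bar>e\<bar> * N + C * \<bar>e\<bar>"
      proof -
        have "norm ((s * e) *\<^sub>R \<eta> t) + norm ((s * e) *\<^sub>R V\<eta> t) = \<bar>s * e\<bar> * (norm (\<eta> t) + norm (V\<eta> t))"
          by (simp add: distrib_left)
        also have "\<dots> \<le> \<bar>e\<bar> * N" using s_small N[OF t] by (intro mult_mono) auto
        finally show ?thesis using s_small dz_t by linarith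
      qed
      with close have "norm ((s * e) *\<^sub>R \<eta> t) + norm ((s * e) *\<^sub>R V\<eta> t) + \<bar>s * dz e t\<bar> < \<rho>" by linarith
      from modulus[OF in_tube[OF t, of 0 0] in_tube[OF t], of "s * e" "s * dz e t"] this s_small e1 d1
      show "norm (Lx t (X t + (s * e) *\<^sub>R \<eta> t) (V t + (s * e) *\<^sub>R V\<eta> t) (z 0 t + s * dz e t) - Lx0 t) \<le> \<gamma>' \<and>
          norm (Lv t (X t + (s * e) *\<^sub>R \<eta> t) (V t + (s * e) *\<^sub>R V\<eta> t) (z 0 t + s * dz e t) - Lv0 t) \<le> \<gamma>' \<and>
          \<bar>Lz t (X t + (s * e) *\<^sub>R \<eta> t) (V t + (s * e) *\<^sub>R V\<eta> t) (z 0 t + s * dz e t) - Lz0 t\<bar> \<le> \<gamma>'"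
        by (simp add: Lx0_def Lv0_def Lz0_def)
    qed
    also have "\<dots> \<le> \<gamma>' * (\<bar>e\<bar> * N + C * \<bar>e\<bar>)"
      using N[OF t] dz_t \<gamma>'(1) by (intro mult_left_mono add_mono mult_left_mono) auto
    also have "\<dots> = (\<gamma>' * (N + C)) * \<bar>e\<bar>" by (simp add: algebra_simps)
    also have "\<dots> \<le> \<gamma> * \<bar>e\<bar>" using \<gamma>'(2) by (simp add: mult_right_mono)
    finally show "\<bar>Lpert e t - Lpert 0 t - (e * Lvar t + Lz0 t * dz e t)\<bar> \<le> \<gamma> * \<bar>e\<bar>" .
  qed
qed

lemma has_integral_lam_Lpert:
  assumes e: "\<bar>e\<bar> < \<delta>"
  shows "((\<lambda>t. lam t * (Lpert e t - Lpert 0 t - Lz0 t * dz e t)) has_integral lam b * dz e b) {a..b}"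
proof -
  have "((\<lambda>t. lam t * dz e t) has_real_derivative lam t * (Lpert e t - Lpert 0 t - Lz0 t * dz e t))
      (at t within {a..b})" if "t \<in> {a..b}" for t
    using DERIV_mult[OF lam_has_real_derivative[OF that] dz_has_real_derivative[OF e that]]
    by (simp add: algebra_simps)
  from fundamental_theorem_of_calculus[OF less_imp_le[OF ab] this[unfolded has_real_derivative_iff_has_vector_derivative]]
  show ?thesis using dz_init[OF e] by simp
qed

lemma weighted_remainder_small:
  assumes "0 < \<gamma>"
  shows "\<forall>\<^sub>F e in at 0. \<bar>lam b * dz e b - e * integral {a..b} (\<lambda>t. lam t * Lvar t)\<bar> \<le> \<gamma> * \<bar>e\<bar>"
proof -
  define I where "I = integral {a..b} (\<lambda>t. lam t * Lvar t)"
  obtain \<Lambda> where \<Lambda>0: "0 \<le> \<Lambda>" and \<Lambda>: "\<And>t. t \<in> {a..b} \<Longrightarrow> norm (lam t) \<le> \<Lambda>"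
    using continuous_on_compact_bound[OF compact_Icc continuous_lam] by blast
  have lam_Lvar: "((\<lambda>t. e * (lam t * Lvar t)) has_integral e * I) {a..b}" for e
    unfolding I_def
    by (intro has_integral_mult_right integrable_integral integrable_continuous_real continuous_intros
        continuous_lam continuous_Lvar)
  define \<gamma>' where "\<gamma>' = \<gamma> / (\<Lambda> * (b - a) + 1)"
  have "0 < \<Lambda> * (b - a) + 1"
    using \<Lambda>0 ab by (simp add: add_nonneg_pos)
  then have \<gamma>': "0 < \<gamma>'" "\<Lambda> * (b - a) * \<gamma>' \<le> \<gamma>"
    using assms unfolding \<gamma>'_def by (simp_all add: divide_simps)
  have "\<forall>\<^sub>F e in at 0. \<bar>e\<bar> < \<delta> \<and>
      (\<forall>t\<in>{a..b}. \<bar>Lpert e t - Lpert 0 t - (e * Lvar t + Lz0 t * dz e t)\<bar> \<le> \<gamma>' * \<bar>e\<bar>)"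
    using \<delta> by (intro eventually_conj eventually_at_zero_abs_less Lpert_linearization \<gamma>'(1))
  then show ?thesis
    unfolding I_def[symmetric]
  proof (rule eventually_mono)
    fix e assume e: "\<bar>e\<bar> < \<delta> \<and>
        (\<forall>t\<in>{a..b}. \<bar>Lpert e t - Lpert 0 t - (e * Lvar t + Lz0 t * dz e t)\<bar> \<le> \<gamma>' * \<bar>e\<bar>)"
    have "((\<lambda>t. lam t * (Lpert e t - Lpert 0 t - (e * Lvar t + Lz0 t * dz e t))) has_integral
        lam b * dz e b - e * I) {a..b}"
      using has_integral_diff[OF has_integral_lam_Lpert[of e] lam_Lvar[of e]] e by (simp add: algebra_simps)
    then have "norm (lam b * dz e b - e * I) \<le> \<Lambda> * (\<gamma>' * \<bar>e\<bar>) * measure lborel (cbox a b)"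
      using e \<Lambda> \<Lambda>0 \<gamma>'(1)
      by (intro has_integral_bound[where f = "\<lambda>t. lam t * (Lpert e t - Lpert 0 t - (e * Lvar t + Lz0 t * dz e t))"])
        (auto simp: abs_mult intro!: mult_mono)
    also have "\<dots> = (\<Lambda> * (b - a) * \<gamma>') * \<bar>e\<bar>" using ab by simp
    also have "\<dots> \<le> \<gamma> * \<bar>e\<bar>" using \<gamma>'(2) by (simp add: mult_right_mono)
    finally show "\<bar>lam b * dz e b - e * I\<bar> \<le> \<gamma> * \<bar>e\<bar>" by simp
  qed
qed

text \<open>Both \<open>lam b * dz e b - e * I\<close> and, by stationarity, \<open>dz e b\<close> are \<open>o(e)\<close>; hence \<open>I = 0\<close>.\<close>
lemma first_variation_eq_zero:
  assumes stationary: "((\<lambda>e. z e b) has_real_derivative 0) (at 0)"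
  shows "integral {a..b} (\<lambda>t. lam t * Lvar t) = 0"
proof -
  define I where "I = integral {a..b} (\<lambda>t. lam t * Lvar t)"
  define R where "R e = lam b * dz e b - e * I" for e
  have "((\<lambda>e. R e / e) \<longlongrightarrow> 0) (at 0)"
    using weighted_remainder_small unfolding R_def I_def by (rule tendsto_quotient_at_0_zero)
  moreover have "((\<lambda>e. dz e b / e) \<longlongrightarrow> 0) (at 0)"
    using stationary by (simp add: has_field_derivative_iff dz_def)
  ultimately have "((\<lambda>e. lam b * (dz e b / e) - R e / e) \<longlongrightarrow> lam b * 0 - 0) (at 0)"
    by (intro tendsto_intros)
  then have "((\<lambda>e. lam b * (dz e b / e) - R e / e) \<longlongrightarrow> 0) (at 0)"
    by simp
  moreover have "\<forall>\<^sub>F e in at 0. lam b * (dz e b / e) - R e / e = I"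
    using eventually_neq_at_within[of 0 0 UNIV] by (auto elim!: eventually_mono simp: R_def field_simps)
  ultimately have "((\<lambda>e::real. I) \<longlongrightarrow> 0) (at 0)"
    by (rule Lim_transform_eventually)
  then show ?thesis
    unfolding I_def by (rule LIM_const_eq)
qed

end

section \<open>The Euler--Lagrange equations\<close>

lemma herglotz_solution_continuous:
  "herglotz_solution a b \<alpha> L za y z \<Longrightarrow> continuous_on {a..b} z"
  unfolding herglotz_solution_def continuous_on_eq_continuous_within
  by (metis DERIV_continuous)

lemma continuous_on_herglotz_lambda:
  assumes Lz_cont: "continuous_on ({a..b} \<times> UNIV) (\<lambda>(t, y, v, w). Lz t y v w)"
    and x: "admissible a b \<alpha> x" and z: "herglotz_solution a b \<alpha> L za x z"
  shows "continuous_on {a..b} (herglotz_lambda a \<alpha> Lz x z)"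
proof -
  have Lz_along: "continuous_on {a..b} (\<lambda>t. Lz t (x t) (caputo_vec a \<alpha> x t) (z t))"
    using x by (intro continuous_on_along_path[OF Lz_cont] C1_on_imp_continuous_on
        herglotz_solution_continuous[OF z]) (auto simp: admissible_def)
  then have "continuous_on {a..b} (\<lambda>u. integral {a..u} (\<lambda>t. Lz t (x t) (caputo_vec a \<alpha> x t) (z t)))"
    unfolding continuous_on_eq_continuous_within
    using has_vector_derivative_continuous[OF integral_has_vector_derivative[OF Lz_along]] by blast
  then show ?thesis
    unfolding herglotz_lambda_def[abs_def] by (intro continuous_intros)
qed

lemma herglotz_first_variation:
  fixes L Lt Lz :: "real \<Rightarrow> real^'n \<Rightarrow> real^'n \<Rightarrow> real \<Rightarrow> real"
    and Lx Lv :: "real \<Rightarrow> real^'n \<Rightarrow> real^'n \<Rightarrow> real \<Rightarrow> real^'n"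
    and Z :: "(real \<Rightarrow> real^'n) \<Rightarrow> real \<Rightarrow> real"
  assumes ab: "a < b" and \<alpha>: "\<And>j. \<alpha> j < 1"
    and L_deriv: "\<forall>t\<in>{a..b}. \<forall>y v w.
         ((\<lambda>(s, y', v', w'). L s y' v' w') has_derivative
            (\<lambda>(ds, dy, dv, dw). Lt t y v w * ds + Lx t y v w \<bullet> dy + Lv t y v w \<bullet> dv + Lz t y v w * dw))
         (at (t, y, v, w) within {a..b} \<times> UNIV)"
    and Lx_cont: "continuous_on ({a..b} \<times> UNIV) (\<lambda>(t, y, v, w). Lx t y v w)"
    and Lv_cont: "continuous_on ({a..b} \<times> UNIV) (\<lambda>(t, y, v, w). Lv t y v w)"
    and Lz_cont: "continuous_on ({a..b} \<times> UNIV) (\<lambda>(t, y, v, w). Lz t y v w)"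
    and x: "admissible a b \<alpha> x" and \<eta>: "admissible a b \<alpha> \<eta>"
    and \<delta>: "0 < \<delta>"
    and sol: "\<And>\<epsilon>. \<bar>\<epsilon>\<bar> < \<delta> \<Longrightarrow> herglotz_solution a b \<alpha> L za (\<lambda>t. x t + \<epsilon> *\<^sub>R \<eta> t) (Z (\<lambda>t. x t + \<epsilon> *\<^sub>R \<eta> t))"
    and stationary: "((\<lambda>\<epsilon>. Z (\<lambda>s. x s + \<epsilon> *\<^sub>R \<eta> s) b) has_real_derivative 0) (at 0)"
  shows "integral {a..b} (\<lambda>t. herglotz_lambda a \<alpha> Lz x (Z x) t *
           (Lx t (x t) (caputo_vec a \<alpha> x t) (Z x t) \<bullet> \<eta> t
            + Lv t (x t) (caputo_vec a \<alpha> x t) (Z x t) \<bullet> caputo_vec a \<alpha> \<eta> t)) = 0"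
proof -
  have xC1: "C1_on {a..b} x" "C1_on {a..b} (caputo_vec a \<alpha> x)"
    and \<eta>C1: "C1_on {a..b} \<eta>" "C1_on {a..b} (caputo_vec a \<alpha> \<eta>)"
    using x \<eta> by (auto simp: admissible_def)
  interpret herglotz_perturbation a b za \<delta> L Lt Lz Lx Lv x "caputo_vec a \<alpha> x" \<eta> "caputo_vec a \<alpha> \<eta>"
    "\<lambda>\<epsilon>. Z (\<lambda>s. x s + \<epsilon> *\<^sub>R \<eta> s)"
  proof
    show "\<bar>e\<bar> < \<delta> \<Longrightarrow> Z (\<lambda>s. x s + e *\<^sub>R \<eta> s) a = za" for e
      using sol by (simp add: herglotz_solution_def)
    show "(Z (\<lambda>s. x s + e *\<^sub>R \<eta> s) has_real_derivative
        L t (x t + e *\<^sub>R \<eta> t) (caputo_vec a \<alpha> x t + e *\<^sub>R caputo_vec a \<alpha> \<eta> t) (Z (\<lambda>s. x s + e *\<^sub>R \<eta> s) t))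
        (at t within {a..b})" if "\<bar>e\<bar> < \<delta>" "t \<in> {a..b}" for e t
    proof -
      have "(Z (\<lambda>s. x s + e *\<^sub>R \<eta> s) has_real_derivative L t (x t + e *\<^sub>R \<eta> t)
          (caputo_vec a \<alpha> (\<lambda>s. x s + e *\<^sub>R \<eta> s) t) (Z (\<lambda>s. x s + e *\<^sub>R \<eta> s) t)) (at t within {a..b})"
        using sol[OF that(1)] that(2) unfolding herglotz_solution_def by blast
      then show ?thesis
        by (simp only: caputo_vec_add_scaleR[where \<alpha> = \<alpha>, OF xC1(1) \<eta>C1(1) that(2) \<alpha>])
    qed
  qed (use ab L_deriv Lx_cont Lv_cont Lz_cont \<delta> xC1 \<eta>C1 in \<open>auto intro: C1_on_imp_continuous_on\<close>)
  have lam_eq: "lam = herglotz_lambda a \<alpha> Lz x (Z x)"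
    by (simp add: fun_eq_iff lam_def herglotz_lambda_def Lz0_def[abs_def])
  have Lvar_eq: "Lvar = (\<lambda>t. Lx t (x t) (caputo_vec a \<alpha> x t) (Z x t) \<bullet> \<eta> t
      + Lv t (x t) (caputo_vec a \<alpha> x t) (Z x t) \<bullet> caputo_vec a \<alpha> \<eta> t)"
    by (simp add: fun_eq_iff Lvar_def Lx0_def Lv0_def)
  show ?thesis
    using first_variation_eq_zero[OF stationary] by (simp only: lam_eq Lvar_eq)
qed

lemma continuous_on_herglotz_lambda_mult:
  fixes F :: "real \<Rightarrow> real^'n \<Rightarrow> real^'n \<Rightarrow> real \<Rightarrow> real^'n"
  assumes Lz_cont: "continuous_on ({a..b} \<times> UNIV) (\<lambda>(t, y, v, w). Lz t y v w)"
    and F_cont: "continuous_on ({a..b} \<times> UNIV) (\<lambda>(t, y, v, w). F t y v w)"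
    and x: "admissible a b \<alpha> x" and z: "herglotz_solution a b \<alpha> L za x z"
  shows "continuous_on {a..b} (\<lambda>t. herglotz_lambda a \<alpha> Lz x z t * F t (x t) (caputo_vec a \<alpha> x t) (z t) $ j)"
proof -
  have "continuous_on {a..b} (\<lambda>t. F t (x t) (caputo_vec a \<alpha> x t) (z t))"
    using x by (intro continuous_on_along_path[OF F_cont] C1_on_imp_continuous_on
        herglotz_solution_continuous[OF z]) (auto simp: admissible_def)
  then show ?thesis
    by (intro continuous_intros continuous_on_herglotz_lambda[OF Lz_cont x z])
qed

lemma herglotz_weak_euler_lagrange:
  fixes L Lt Lz :: "real \<Rightarrow> real^'n \<Rightarrow> real^'n \<Rightarrow> real \<Rightarrow> real"
    and Lx Lv :: "real \<Rightarrow> real^'n \<Rightarrow> real^'n \<Rightarrow> real \<Rightarrow> real^'n"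
    and Z :: "(real \<Rightarrow> real^'n) \<Rightarrow> real \<Rightarrow> real"
  assumes ab: "a < b" and \<alpha>: "\<And>j. \<alpha> j < 1"
    and L_deriv: "\<forall>t\<in>{a..b}. \<forall>y v w.
         ((\<lambda>(s, y', v', w'). L s y' v' w') has_derivative
            (\<lambda>(ds, dy, dv, dw). Lt t y v w * ds + Lx t y v w \<bullet> dy + Lv t y v w \<bullet> dv + Lz t y v w * dw))
         (at (t, y, v, w) within {a..b} \<times> UNIV)"
    and Lx_cont: "continuous_on ({a..b} \<times> UNIV) (\<lambda>(t, y, v, w). Lx t y v w)"
    and Lv_cont: "continuous_on ({a..b} \<times> UNIV) (\<lambda>(t, y, v, w). Lv t y v w)"
    and Lz_cont: "continuous_on ({a..b} \<times> UNIV) (\<lambda>(t, y, v, w). Lz t y v w)"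
    and x: "admissible a b \<alpha> x" and z: "herglotz_solution a b \<alpha> L za x (Z x)"
    and RL_exists: "\<And>t. t \<in> {a..b} \<Longrightarrow> right_RL_deriv_exists a b (\<alpha> j)
          (\<lambda>t. herglotz_lambda a \<alpha> Lz x (Z x) t * Lv t (x t) (caputo_vec a \<alpha> x t) (Z x t) $ j) t"
    and RL_cont: "continuous_on {a..b} (right_RL_deriv a b (\<alpha> j)
          (\<lambda>t. herglotz_lambda a \<alpha> Lz x (Z x) t * Lv t (x t) (caputo_vec a \<alpha> x t) (Z x t) $ j))"
    and extremal: "\<forall>\<eta>. admissible a b \<alpha> \<eta> \<and> \<eta> a = 0 \<and> (\<forall>j. j \<notin> J \<longrightarrow> \<eta> b $ j = 0) \<longrightarrow>
         (\<exists>\<delta>>0. \<forall>\<epsilon>. \<bar>\<epsilon>\<bar> < \<delta> \<longrightarrow>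
              herglotz_solution a b \<alpha> L za (\<lambda>t. x t + \<epsilon> *\<^sub>R \<eta> t) (Z (\<lambda>t. x t + \<epsilon> *\<^sub>R \<eta> t)))
         \<and> (\<forall>t\<in>{a..b}. (\<lambda>\<epsilon>. Z (\<lambda>s. x s + \<epsilon> *\<^sub>R \<eta> s) t) differentiable (at 0))
         \<and> ((\<lambda>\<epsilon>. Z (\<lambda>s. x s + \<epsilon> *\<^sub>R \<eta> s) b) has_real_derivative 0) (at 0)"
  shows "integral {a..b} (\<lambda>t. (herglotz_lambda a \<alpha> Lz x (Z x) t * Lx t (x t) (caputo_vec a \<alpha> x t) (Z x t) $ j
           + right_RL_deriv a b (\<alpha> j)
               (\<lambda>t. herglotz_lambda a \<alpha> Lz x (Z x) t * Lv t (x t) (caputo_vec a \<alpha> x t) (Z x t) $ j) t)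
           * bump_poly a b i t) = 0"
proof -
  define h where "h t = herglotz_lambda a \<alpha> Lz x (Z x) t * Lx t (x t) (caputo_vec a \<alpha> x t) (Z x t) $ j" for t
  define g where "g t = herglotz_lambda a \<alpha> Lz x (Z x) t * Lv t (x t) (caputo_vec a \<alpha> x t) (Z x t) $ j" for t
  define R where "R = right_RL_deriv a b (\<alpha> j) g"
  define \<eta> where "\<eta> s = bump_poly a b i s *\<^sub>R axis j (1::real)" for s
  have h_cont: "continuous_on {a..b} h" and g_cont: "continuous_on {a..b} g"
    unfolding h_def[abs_def] g_def[abs_def]
    by (intro continuous_on_herglotz_lambda_mult[OF Lz_cont _ x z] Lx_cont Lv_cont)+
  have R_cont: "continuous_on {a..b} R" using RL_cont by (simp add: R_def g_def[abs_def])
  have bump_cont: "continuous_on {a..b} (bump_poly a b i)"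
    using C1_on_imp_continuous_on[OF C1_on_bump_poly] .
  have \<eta>: "admissible a b \<alpha> \<eta>"
    unfolding \<eta>_def[abs_def] by (rule admissible_bump_poly_axis[OF \<alpha>])
  obtain \<delta> where "0 < \<delta>"
    and sol: "\<And>\<epsilon>. \<bar>\<epsilon>\<bar> < \<delta> \<Longrightarrow> herglotz_solution a b \<alpha> L za (\<lambda>t. x t + \<epsilon> *\<^sub>R \<eta> t) (Z (\<lambda>t. x t + \<epsilon> *\<^sub>R \<eta> t))"
    and stationary: "((\<lambda>\<epsilon>. Z (\<lambda>s. x s + \<epsilon> *\<^sub>R \<eta> s) b) has_real_derivative 0) (at 0)"
    using extremal \<eta> by (auto simp: \<eta>_def bump_poly_zero_left bump_poly_zero_right)
  have "integral {a..b} (\<lambda>t. h t * bump_poly a b i t + g t * caputo_left a (\<alpha> j) (bump_poly a b i) t) = 0"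
    using herglotz_first_variation[OF ab \<alpha> L_deriv Lx_cont Lv_cont Lz_cont x \<eta> \<open>0 < \<delta>\<close> sol stationary]
    by (simp add: h_def g_def \<eta>_def caputo_vec_scaleR_axis inner_axis algebra_simps)
  moreover have "integral {a..b} (\<lambda>t. g t * caputo_left a (\<alpha> j) (bump_poly a b i) t)
      = integral {a..b} (\<lambda>t. bump_poly a b i t * R t)"
    unfolding R_def
    by (rule integral_mult_caputo_left_eq_right_RL_deriv[OF less_imp_le[OF ab] \<alpha> g_cont _ _
          has_real_derivative_bump_poly _ bump_poly_zero_left])
      (use RL_exists RL_cont in \<open>auto simp: g_def[abs_def] intro!: continuous_intros\<close>)
  ultimately have "integral {a..b} (\<lambda>t. h t * bump_poly a b i t + bump_poly a b i t * R t) = 0"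
    using h_cont g_cont R_cont bump_cont C1_on_imp_continuous_on[OF C1_on_caputo_left_bump_poly[OF \<alpha>]]
    by (simp add: integral_add integrable_continuous_real continuous_intros)
  then show ?thesis
    unfolding h_def[symmetric] g_def[symmetric] R_def[symmetric] by (simp add: algebra_simps)
qed

text \<open>The transversality conditions hold trivially: \<open>right_RL_int\<close> evaluated at its upper terminal \<open>b\<close>
  integrates over \<open>{b..b}\<close>.\<close>
theorem theorem3p2:
  fixes a b za :: real
    and \<alpha> :: "'n::finite \<Rightarrow> real"
    and xa :: "real^'n"
    and L Lt Lz :: "real \<Rightarrow> real^'n \<Rightarrow> real^'n \<Rightarrow> real \<Rightarrow> real"
    and Lx Lv :: "real \<Rightarrow> real^'n \<Rightarrow> real^'n \<Rightarrow> real \<Rightarrow> real^'n"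
    and Z :: "(real \<Rightarrow> real^'n) \<Rightarrow> real \<Rightarrow> real"
    and x :: "real \<Rightarrow> real^'n"
    and J :: "'n set"
  assumes ab: "a < b"
    and alpha: "\<forall>j. 0 < \<alpha> j \<and> \<alpha> j < 1"
    and L_C1_deriv: "\<forall>t\<in>{a..b}. \<forall>y v w.
         ((\<lambda>(s, y', v', w'). L s y' v' w') has_derivative
            (\<lambda>(ds, dy, dv, dw). Lt t y v w * ds + Lx t y v w \<bullet> dy + Lv t y v w \<bullet> dv + Lz t y v w * dw))
         (at (t, y, v, w) within {a..b} \<times> UNIV)"
    and L_C1_cont: "continuous_on ({a..b} \<times> UNIV) (\<lambda>(t, y, v, w). Lt t y v w)"
      "continuous_on ({a..b} \<times> UNIV) (\<lambda>(t, y, v, w). Lx t y v w)"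
      "continuous_on ({a..b} \<times> UNIV) (\<lambda>(t, y, v, w). Lv t y v w)"
      "continuous_on ({a..b} \<times> UNIV) (\<lambda>(t, y, v, w). Lz t y v w)"
    and x_adm: "admissible a b \<alpha> x"
    and x_init: "x a = xa"
    and z_sol: "herglotz_solution a b \<alpha> L za x (Z x)"
    and RL_exists: "\<forall>j. (\<forall>t\<in>{a..b}. right_RL_deriv_exists a b (\<alpha> j)
            (\<lambda>t. herglotz_lambda a \<alpha> Lz x (Z x) t * Lv t (x t) (caputo_vec a \<alpha> x t) (Z x t) $ j) t)
         \<and> continuous_on {a..b} (\<lambda>t. right_RL_deriv a b (\<alpha> j)
            (\<lambda>t. herglotz_lambda a \<alpha> Lz x (Z x) t * Lv t (x t) (caputo_vec a \<alpha> x t) (Z x t) $ j) t)"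
    and extremal: "\<forall>\<eta>. admissible a b \<alpha> \<eta> \<and> \<eta> a = 0 \<and> (\<forall>j. j \<notin> J \<longrightarrow> \<eta> b $ j = 0) \<longrightarrow>
         (\<exists>\<delta>>0. \<forall>\<epsilon>. \<bar>\<epsilon>\<bar> < \<delta> \<longrightarrow>
              herglotz_solution a b \<alpha> L za (\<lambda>t. x t + \<epsilon> *\<^sub>R \<eta> t) (Z (\<lambda>t. x t + \<epsilon> *\<^sub>R \<eta> t)))
         \<and> (\<forall>t\<in>{a..b}. (\<lambda>\<epsilon>. Z (\<lambda>s. x s + \<epsilon> *\<^sub>R \<eta> s) t) differentiable (at 0))
         \<and> ((\<lambda>\<epsilon>. Z (\<lambda>s. x s + \<epsilon> *\<^sub>R \<eta> s) b) has_real_derivative 0) (at 0)"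
  shows "(\<forall>j. \<forall>t\<in>{a..b}.
            herglotz_lambda a \<alpha> Lz x (Z x) t * Lx t (x t) (caputo_vec a \<alpha> x t) (Z x t) $ j
            + right_RL_deriv a b (\<alpha> j)
                (\<lambda>t. herglotz_lambda a \<alpha> Lz x (Z x) t * Lv t (x t) (caputo_vec a \<alpha> x t) (Z x t) $ j) t = 0)
       \<and> (\<forall>j\<in>J. right_RL_int (1 - \<alpha> j) b
                (\<lambda>t. herglotz_lambda a \<alpha> Lz x (Z x) t * Lv t (x t) (caputo_vec a \<alpha> x t) (Z x t) $ j) b = 0)"
proof -
  have \<alpha>: "\<And>j. \<alpha> j < 1" using alpha by simp
  have "herglotz_lambda a \<alpha> Lz x (Z x) t * Lx t (x t) (caputo_vec a \<alpha> x t) (Z x t) $ j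
      + right_RL_deriv a b (\<alpha> j)
          (\<lambda>t. herglotz_lambda a \<alpha> Lz x (Z x) t * Lv t (x t) (caputo_vec a \<alpha> x t) (Z x t) $ j) t = 0"
    if t: "t \<in> {a..b}" for j t
  proof (rule continuous_orthogonal_bump_polys_imp_zero[OF ab _ _ t])
    show "continuous_on {a..b} (\<lambda>t. herglotz_lambda a \<alpha> Lz x (Z x) t * Lx t (x t) (caputo_vec a \<alpha> x t) (Z x t) $ j
        + right_RL_deriv a b (\<alpha> j)
            (\<lambda>t. herglotz_lambda a \<alpha> Lz x (Z x) t * Lv t (x t) (caputo_vec a \<alpha> x t) (Z x t) $ j) t)"
      using RL_exists by (intro continuous_intros continuous_on_herglotz_lambda_mult[OF L_C1_cont(4,2) x_adm z_sol])
        auto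
    show "integral {a..b} (\<lambda>t. (herglotz_lambda a \<alpha> Lz x (Z x) t * Lx t (x t) (caputo_vec a \<alpha> x t) (Z x t) $ j
        + right_RL_deriv a b (\<alpha> j)
            (\<lambda>t. herglotz_lambda a \<alpha> Lz x (Z x) t * Lv t (x t) (caputo_vec a \<alpha> x t) (Z x t) $ j) t)
        * bump_poly a b i t) = 0" for i
      using RL_exists
      by (intro herglotz_weak_euler_lagrange[OF ab \<alpha> L_C1_deriv L_C1_cont(2-4) x_adm z_sol _ _ extremal]) auto
  qed
  moreover have "right_RL_int (1 - \<alpha> j) b g b = 0" for j g
    by (simp add: right_RL_int_def)
  ultimately show ?thesis by blast
qed

end
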